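(* Let $N\ge1$, $d\ge1$, and let $U_1,\dots,U_N:\mathbb{R}^d\to\mathbb{R}$ and $U=\sum_n U_n$ satisfy: (A1) each $U_n$ is $C^2$ with $K$-Lipschitz gradient for some $K>0$; (A2) each $U_n$ is coercive and there is $C_1>0$ with $\langle x,\nabla U_n(x)\rangle\ge0$ for $\|x\|\ge C_1$; (A3) $\min_x U(x)=0$ and $\inf_x(\|\nabla U(x)\|^2-\Delta U(x))>-\infty$; (A4) the probability measures $\pi^\varepsilon$ with density proportional to $\exp(-2U(x)/\varepsilon^2)$ have a weak limit as $\varepsilon\to0$; (A5) $\liminf_{\|x\|\to\infty}\langle \nabla U(x)/\|\nabla U(x)\|, x/\|x\|\rangle\ge((4d-4)/(4d-3))^{1/2}$, $\liminf_{\|x\|\to\infty}\|\nabla U(x)\|/\|x\|>0$, $\limsup_{\|x\|\to\infty}\|\nabla U(x)\|/\|x\|<\infty$. Let $G$ be an undirected connected graph on $\{1,\dots,N\}$ with Laplacian $L$. Let $\mathbf{x}_t\in\mathbb{R}^{Nd}$ (stacking $\mathbf{x}_n(t)\in\mathbb{R}^d$) satisfy $$\mathbf{x}_{t+1}=\mathbf{x}_t-\beta_t(L\otimes I_d)\mathbf{x}_t-\alpha_t\big(\nabla\hat U(\mathbf{x}_t)+\boldsymbol{\xi}_t\big)+\gamma_t\mathbf{w}_t,$$ where $\hat U(\mathbf{x})=\sum_{n=1}^N U_n(\mathbf{x}_n)$, and with $\mathcal{F}_t$ the natural filtration generated by $\{\mathbf{x}_s\}_{s\le t}$, $\{\boldsymbol{\xi}_s,\mathbf{w}_s\}_{s\le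 t-1}$: (A6) $\{\boldsymbol{\xi}_t\}$ is $\{\mathcal{F}_{t+1}\}$-adapted, $\mathbb{E}[\boldsymbol{\xi}_t\mid\mathcal{F}_t]=0$, $\mathbb{E}[\|\boldsymbol{\xi}_t\|^2\mid\mathcal{F}_t]<B$ for some $B>0$; (A7) $\mathbf{w}_t=(\mathbf{w}_n(t))_n$ where each $\{\mathbf{w}_n(t)\}_t$ is i.i.d. standard Gaussian in $\mathbb{R}^d$, $\mathbf{w}_n(t)$ is independent of $\mathcal{F}_t$, and the sequences for different $n$ are mutually independent; (A8) for $t$ large, $\alpha_t=c_\alpha/t$, $\beta_t=c_\beta/t^{\tau_\beta}$, $\gamma_t=c_\gamma/(t^{1/2}\sqrt{\log\log t})$ with $c_\alpha,c_\beta,c_\gamma>0$, $\tau_\beta\in(0,1/2)$. Then for every $\eta>1/2$, with probability 1, $$\sup_{t\ge1}\frac{\|\mathbf{x}_t\|}{t^\eta}<\infty.$$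
   Context: $\otimes$ is the Kronecker product; $\|\cdot\|$ is the Euclidean norm; the initial condition $\mathbf{x}_1$ is deterministic. *)

theory Defs
  imports "HOL-Probability.Probability"
begin

definition graph_laplacian :: "('n::finite \<Rightarrow> 'n \<Rightarrow> bool) \<Rightarrow> 'n \<Rightarrow> 'n \<Rightarrow> real" where
  "graph_laplacian E i j =
     (if i = j then real (card {k. E i k}) else if E i j then -1 else 0)"

definition undirected_graph :: "('n \<Rightarrow> 'n \<Rightarrow> bool) \<Rightarrow> bool" where
  "undirected_graph E \<longleftrightarrow> (\<forall>i j. E i j \<longleftrightarrow> E j i) \<and> (\<forall>i. \<not> E i i)"

definition connected_graph :: "('n \<Rightarrow> 'n \<Rightarrow> bool) \<Rightarrow> bool" where
  "connected_graph E \<longleftrightarrow> (\<forall>i j. E\<^sup>*\<^sup>* i j)"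

text \<open>(L \<otimes> I_d) applied to a stacked vector.\<close>
definition kron_lap :: "('n::finite \<Rightarrow> 'n \<Rightarrow> real) \<Rightarrow> real^'d^'n \<Rightarrow> real^'d^'n" where
  "kron_lap L x = (\<chi> n. \<Sum>m\<in>UNIV. L n m *\<^sub>R (x $ m))"

definition nat_filtration ::
  "'a measure \<Rightarrow> (nat \<Rightarrow> 'a \<Rightarrow> 'b::topological_space) \<Rightarrow> (nat \<Rightarrow> 'a \<Rightarrow> 'b)
     \<Rightarrow> (nat \<Rightarrow> 'a \<Rightarrow> 'b) \<Rightarrow> nat \<Rightarrow> 'a measure" where
  "nat_filtration M x xi w t = sigma (space M)
     ({x s -` A \<inter> space M | s A. 1 \<le> s \<and> s \<le> t \<and> A \<in> sets borel} \<union>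
      {xi s -` A \<inter> space M | s A. 1 \<le> s \<and> s < t \<and> A \<in> sets borel} \<union>
      {w s -` A \<inter> space M | s A. 1 \<le> s \<and> s < t \<and> A \<in> sets borel})"

definition gibbs_Z :: "('d::euclidean_space \<Rightarrow> real) \<Rightarrow> real \<Rightarrow> real" where
  "gibbs_Z U \<epsilon> = (\<integral>x. exp (- 2 * U x / \<epsilon>\<^sup>2) \<partial>lborel)"

definition gibbs_weak_limit_exists :: "('d::euclidean_space \<Rightarrow> real) \<Rightarrow> bool" where
  "gibbs_weak_limit_exists U \<longleftrightarrow>
     (\<forall>\<epsilon>>0. integrable lborel (\<lambda>x. exp (- 2 * U x / \<epsilon>\<^sup>2)) \<and> gibbs_Z U \<epsilon> > 0) \<and>
     (\<exists>\<mu>. prob_space \<mu> \<and> sets \<mu> = sets (borel :: 'd measure) \<and>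
        (\<forall>f :: 'd \<Rightarrow> real. continuous_on UNIV f \<and> bounded (range f) \<longrightarrow>
           ((\<lambda>\<epsilon>. (\<integral>x. f x * exp (- 2 * U x / \<epsilon>\<^sup>2) \<partial>lborel) / gibbs_Z U \<epsilon>)
              \<longlongrightarrow> (\<integral>x. f x \<partial>\<mu>)) (at_right 0)))"

end

theory Submission
  imports Defs
begin

text \<open>
  We only control the second moments u t = E |x t|^2. A consensus step with weight
  \<beta> t \<le> 1/N is non-expansive, and the outward condition together with the Lipschitz bound
  on the local gradients gives |drift x|^2 \<le> (1 + O(\<alpha>\<beta> + \<alpha>^2)) |x|^2 + O(\<alpha>).
  The injected Gaussian noise is independent of the past, so its cross term vanishes in
  expectation, while the martingale noise \<xi> is absorbed by Young's inequality with weight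
  t^-(1+\<delta>). Hence u (t+1) \<le> (1 + O(t^-(1+\<delta>))) u t + O(t^(\<delta>-1)), and a discrete Gronwall
  argument gives u t = O(t^\<delta>). For \<delta> < 2\<eta> - 1 the series of E |x t|^2 / t^(2\<eta>)
  converges, so the series of |x t|^2 / t^(2\<eta>) converges almost surely.
  Of the hypotheses only the Lipschitz and outward conditions on the gradients, the symmetry
  of G, the conditional variance bound on \<xi>, and the Gaussianity of w and its independence of
  the past are used.
\<close>

lemma borel_measurable_vec_nth [measurable (raw)]:
  fixes f :: "'a \<Rightarrow> 'b::real_normed_vector^'n"
  shows "f \<in> borel_measurable M \<Longrightarrow> (\<lambda>\<omega>. f \<omega> $ i) \<in> borel_measurable M"
  by (rule measurable_compose[OF _ borel_measurable_continuous_onI]) (auto intro: continuous_intros)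

lemma norm_vec_sq: "(norm (X :: 'b::real_normed_vector^'n))\<^sup>2 = (\<Sum>i\<in>UNIV. (norm (X $ i))\<^sup>2)"
  unfolding norm_vec_def L2_set_def by (simp add: sum_nonneg)

lemma sq_sum_le_twice_sum_sq: "(x + y)\<^sup>2 \<le> 2 * x\<^sup>2 + 2 * y\<^sup>2" for x y :: real
  using sum_squares_bound[of x y] by (simp add: power2_sum)

lemma norm_sq_diff_scaleR: "(norm (z - a *\<^sub>R v))\<^sup>2 = (norm z)\<^sup>2 - 2 * a * (z \<bullet> v) + a\<^sup>2 * (norm v)\<^sup>2"
  for z v :: "'a::real_inner"
  by (simp only: power2_norm_eq_inner)
    (simp add: inner_diff_left inner_diff_right inner_commute[of v z] power2_eq_square algebra_simps)

lemma norm_add_sq_le_weighted: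
  fixes p q :: "'a::real_normed_vector"
  assumes "0 < e"
  shows "(norm (p + q))\<^sup>2 \<le> (1 + e) * (norm p)\<^sup>2 + (1 + 1 / e) * (norm q)\<^sup>2"
proof -
  have "2 * norm p * norm q \<le> e * (norm p)\<^sup>2 + (1 / e) * (norm q)\<^sup>2"
    using sum_squares_bound[of "sqrt e * norm p" "norm q / sqrt e"] assms
    by (simp add: power_mult_distrib power_divide)
  moreover have "(norm (p + q))\<^sup>2 \<le> (norm p + norm q)\<^sup>2"
    using norm_triangle_ineq[of p q] by (intro power_mono) auto
  ultimately show ?thesis
    by (simp add: power2_sum algebra_simps)
qed

lemma lipschitz_on_vec_lambda_nth:
  fixes g :: "'n::finite \<Rightarrow> 'a::real_normed_vector \<Rightarrow> 'b::real_normed_vector"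
  assumes "\<And>n. K-lipschitz_on UNIV (g n)"
  shows "K-lipschitz_on UNIV (\<lambda>X. \<chi> n. g n (X $ n))"
proof (rule lipschitz_onI)
  have K: "0 \<le> K"
    using assms lipschitz_on_nonneg by blast
  fix X Y :: "'a^'n"
  have "(dist (\<chi> n. g n (X $ n)) (\<chi> n. g n (Y $ n)))\<^sup>2 = (\<Sum>n\<in>UNIV. (dist (g n (X $ n)) (g n (Y $ n)))\<^sup>2)"
    by (simp add: dist_norm norm_vec_sq)
  also have "\<dots> \<le> (\<Sum>n\<in>UNIV. (K * dist (X $ n) (Y $ n))\<^sup>2)"
    using lipschitz_onD[OF assms] by (intro sum_mono power_mono) auto
  also have "\<dots> = (K * dist X Y)\<^sup>2"
    by (simp add: power_mult_distrib dist_norm norm_vec_sq[of "X - Y"] sum_distrib_left)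
  finally show "dist (\<chi> n. g n (X $ n)) (\<chi> n. g n (Y $ n)) \<le> K * dist X Y"
    by (rule power2_le_imp_le) (simp add: K)
qed (use assms lipschitz_on_nonneg in blast)

lemma norm_le_lipschitz:
  assumes "K-lipschitz_on UNIV f"
  shows "norm (f y) \<le> norm (f 0) + K * norm y"
  using lipschitz_onD[OF assms, of y 0] norm_triangle_ineq2[of "f y" "f 0"] by (simp add: dist_norm)

section \<open>Standard Gaussian vectors\<close>

lemma nn_integral_std_normal_density: "(\<integral>\<^sup>+x. ennreal (std_normal_density x) \<partial>lborel) = 1"
  by (subst nn_integral_eq_integral) auto

lemma nn_integral_std_normal_vec_coordinate:
  fixes h :: "real \<Rightarrow> ennreal" and i :: "'d::finite"
  assumes [measurable]: "h \<in> borel_measurable borel"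
  shows "(\<integral>\<^sup>+v. ennreal (\<Prod>j\<in>UNIV. std_normal_density (v $ j)) * h (v $ i) \<partial>(lborel::(real^'d) measure))
     = (\<integral>\<^sup>+x. ennreal (std_normal_density x) * h x \<partial>lborel)"
proof -
  define f where "f b x = ennreal (std_normal_density x) * (if b = axis i 1 then h x else 1)"
    for b :: "real^'d" and x
  have basis: "(Basis :: (real^'d) set) = (\<lambda>j. axis j 1) ` UNIV"
    unfolding Basis_vec_def by auto
  have inj: "inj (\<lambda>j::'d. axis j (1::real))"
    by (auto simp: inj_def axis_eq_axis)
  have prod_f: "(\<Prod>b\<in>Basis. F b) = (\<Prod>j\<in>UNIV. F (axis j 1))" for F :: "real^'d \<Rightarrow> ennreal"
    unfolding basis by (simp add: prod.reindex[OF inj])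
  have "ennreal (\<Prod>j\<in>UNIV. std_normal_density (v $ j)) * h (v $ i) = (\<Prod>b\<in>Basis. f b (v \<bullet> b))"
    for v :: "real^'d"
    by (simp add: prod_f f_def inner_axis axis_eq_axis prod.distrib prod_ennreal
        prod.If_cases Int_absorb1 mult.commute)
  then have "(\<integral>\<^sup>+v. ennreal (\<Prod>j\<in>UNIV. std_normal_density (v $ j)) * h (v $ i) \<partial>(lborel::(real^'d) measure))
     = (\<Prod>b\<in>Basis. (\<integral>\<^sup>+x. f b x \<partial>lborel))"
    by (simp add: nn_integral_lborel_prod[symmetric] f_def)
  also have "\<dots> = (\<integral>\<^sup>+x. ennreal (std_normal_density x) * h x \<partial>lborel)"
  proof -
    have "(\<integral>\<^sup>+x. f (axis j 1) x \<partial>lborel)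
        = (if j = i then \<integral>\<^sup>+x. ennreal (std_normal_density x) * h x \<partial>lborel else 1)" for j
      by (simp add: f_def axis_eq_axis nn_integral_std_normal_density)
    then show ?thesis
      by (simp add: prod_f prod.delta)
  qed
  finally show ?thesis .
qed

lemma distributed_std_normal_vec_nth:
  fixes W :: "'a \<Rightarrow> real^'d::finite"
  assumes W: "distributed M lborel W (\<lambda>v. ennreal (\<Prod>j\<in>UNIV. std_normal_density (v $ j)))"
  shows "distributed M lborel (\<lambda>\<omega>. W \<omega> $ i) (\<lambda>x. ennreal (std_normal_density x))"
proof -
  have [measurable]: "W \<in> borel_measurable M"
    using W by (simp add: distributed_def)
  have "emeasure (distr M lborel (\<lambda>\<omega>. W \<omega> $ i)) A
      = emeasure (density lborel (\<lambda>x. ennreal (std_normal_density x))) A"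
    if [measurable]: "A \<in> sets borel" for A
  proof -
    have "emeasure (distr M lborel (\<lambda>\<omega>. W \<omega> $ i)) A = emeasure (distr M lborel W) {v. v $ i \<in> A}"
      by (simp add: emeasure_distr vimage_def Int_def)
    also have "\<dots> = (\<integral>\<^sup>+v. ennreal (\<Prod>j\<in>UNIV. std_normal_density (v $ j)) * indicator A (v $ i) \<partial>lborel)"
      using W by (simp add: distributed_def emeasure_density indicator_def mult.commute)
    also have "\<dots> = (\<integral>\<^sup>+x. ennreal (std_normal_density x) * indicator A x \<partial>lborel)"
      by (rule nn_integral_std_normal_vec_coordinate) simp
    also have "\<dots> = emeasure (density lborel (\<lambda>x. ennreal (std_normal_density x))) A"
      by (simp add: emeasure_density mult.commute)
    finally show ?thesis .
  qed
  then show ?thesis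
    by (auto simp: distributed_def intro!: measure_eqI)
qed

lemma (in prob_space) std_normal_vec_nth_moments:
  fixes W :: "'a \<Rightarrow> real^'d::finite"
  assumes "distributed M lborel W (\<lambda>v. ennreal (\<Prod>j\<in>UNIV. std_normal_density (v $ j)))"
  shows "integrable M (\<lambda>\<omega>. W \<omega> $ i)" "expectation (\<lambda>\<omega>. W \<omega> $ i) = 0"
    and "integrable M (\<lambda>\<omega>. (W \<omega> $ i)\<^sup>2)" "expectation (\<lambda>\<omega>. (W \<omega> $ i)\<^sup>2) = 1"
proof -
  note Wi = distributed_std_normal_vec_nth[OF assms, of i]
  show "integrable M (\<lambda>\<omega>. W \<omega> $ i)"
    using distributed_integrable[OF Wi, of "\<lambda>x. x"] integrable_std_normal_moment[of 1] by simp
  show "expectation (\<lambda>\<omega>. W \<omega> $ i) = 0"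
    by (rule standard_normal_distributed_expectation[OF Wi])
  show "integrable M (\<lambda>\<omega>. (W \<omega> $ i)\<^sup>2)"
    using distributed_integrable[OF Wi, of "\<lambda>x. x\<^sup>2"] integrable_std_normal_moment[of 2] by simp
  show "expectation (\<lambda>\<omega>. (W \<omega> $ i)\<^sup>2) = 1"
    using distributed_integral[OF Wi, of "\<lambda>x. x\<^sup>2"] integral_std_normal_moment_even[of 1] by simp
qed

lemma (in prob_space) std_normal_blocks_norm_sq:
  fixes W :: "'a \<Rightarrow> real^'d::finite^'n::finite"
  assumes "\<And>n. distributed M lborel (\<lambda>\<omega>. W \<omega> $ n) (\<lambda>v. ennreal (\<Prod>j\<in>UNIV. std_normal_density (v $ j)))"
  shows "integrable M (\<lambda>\<omega>. (norm (W \<omega>))\<^sup>2)"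
    and "expectation (\<lambda>\<omega>. (norm (W \<omega>))\<^sup>2) = real CARD('n) * real CARD('d)"
proof -
  note moments = std_normal_vec_nth_moments[OF assms]
  have norm_sq: "(norm (W \<omega>))\<^sup>2 = (\<Sum>n\<in>UNIV. \<Sum>i\<in>UNIV. (W \<omega> $ n $ i)\<^sup>2)" for \<omega>
    by (simp add: norm_vec_sq)
  show "integrable M (\<lambda>\<omega>. (norm (W \<omega>))\<^sup>2)"
    unfolding norm_sq using moments by auto
  show "expectation (\<lambda>\<omega>. (norm (W \<omega>))\<^sup>2) = real CARD('n) * real CARD('d)"
    unfolding norm_sq using moments by (simp add: Bochner_Integration.integral_sum)
qed

lemma (in prob_space) indep_set_mono: "indep_set A B \<Longrightarrow> A' \<subseteq> A \<Longrightarrow> B' \<subseteq> B \<Longrightarrow> indep_set A' B'"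
  unfolding indep_set_def by (rule indep_sets_mono_sets) (auto split: bool.split)

lemma (in prob_space) indep_var_of_indep_set:
  fixes W :: "'a \<Rightarrow> 'b::topological_space" and f :: "'b \<Rightarrow> 'c::topological_space"
  assumes indep: "indep_set (sets F) {W -` A \<inter> space M | A. A \<in> sets borel}"
    and sub: "subalgebra M F"
    and h: "h \<in> borel_measurable F" and W: "W \<in> borel_measurable M" and f: "f \<in> borel_measurable borel"
  shows "indep_var borel h borel (\<lambda>\<omega>. f (W \<omega>))"
  unfolding indep_var_eq
proof (intro conjI)
  have space_F: "space F = space M"
    using sub by (simp add: subalgebra_def)
  show "random_variable borel h"
    using measurable_from_subalg[OF sub h] .
  show "random_variable borel (\<lambda>\<omega>. f (W \<omega>))"
    using W f by measurable
  have "sigma_sets (space M) {h -` A \<inter> space M | A. A \<in> sets borel} \<subseteq> sets F"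
    using h space_F by (intro sets.sigma_sets_subset[of _ F, simplified space_F]) (auto simp: measurable_def)
  moreover have "sigma_sets (space M) {(\<lambda>\<omega>. f (W \<omega>)) -` A \<inter> space M | A. A \<in> sets borel}
      \<subseteq> {W -` A \<inter> space M | A. A \<in> sets borel}"
  proof -
    have W_sets: "sets (vimage_algebra (space M) W borel) = {W -` A \<inter> space M | A. A \<in> sets borel}"
      by (simp add: sets_vimage_algebra2)
    have "{(\<lambda>\<omega>. f (W \<omega>)) -` A \<inter> space M | A. A \<in> sets borel} \<subseteq> sets (vimage_algebra (space M) W borel)"
    proof (clarsimp simp: W_sets)
      fix A :: "'c set" assume "A \<in> sets borel"
      then have "f -` A \<in> sets borel"
        using measurable_sets[OF f] by simp
      then show "\<exists>B. (\<lambda>\<omega>. f (W \<omega>)) -` A \<inter> space M = W -` B \<inter> space M \<and> B \<in> sets borel"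
        by (intro exI[of _ "f -` A"]) auto
    qed
    from sets.sigma_sets_subset[OF this] show ?thesis
      by (simp add: W_sets)
  qed
  ultimately show "indep_set (sigma_sets (space M) {h -` A \<inter> space M | A. A \<in> sets borel})
      (sigma_sets (space M) {(\<lambda>\<omega>. f (W \<omega>)) -` A \<inter> space M | A. A \<in> sets borel})"
    by (rule indep_set_mono[OF indep])
qed

lemma (in prob_space) expectation_inner_indep_zero:
  fixes Y W :: "'a \<Rightarrow> real^'d^'n"
  assumes sub: "subalgebra M F"
    and Y: "Y \<in> borel_measurable F" "integrable M Y"
    and W: "W \<in> borel_measurable M"
    and indep: "\<And>n. indep_set (sets F) {(\<lambda>\<omega>. W \<omega> $ n) -` A \<inter> space M | A. A \<in> sets borel}"
    and W_int: "\<And>n i. integrable M (\<lambda>\<omega>. W \<omega> $ n $ i)"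
    and W_mean: "\<And>n i. expectation (\<lambda>\<omega>. W \<omega> $ n $ i) = 0"
  shows "integrable M (\<lambda>\<omega>. Y \<omega> \<bullet> W \<omega>)" "expectation (\<lambda>\<omega>. Y \<omega> \<bullet> W \<omega>) = 0"
proof -
  have inner: "Y \<omega> \<bullet> W \<omega> = (\<Sum>n\<in>UNIV. \<Sum>i\<in>UNIV. Y \<omega> $ n $ i * W \<omega> $ n $ i)" for \<omega>
    by (simp add: inner_vec_def)
  have summand: "integrable M (\<lambda>\<omega>. Y \<omega> $ n $ i * W \<omega> $ n $ i)
      \<and> expectation (\<lambda>\<omega>. Y \<omega> $ n $ i * W \<omega> $ n $ i) = 0" for n i
  proof -
    have indep_nth: "indep_var borel (\<lambda>\<omega>. Y \<omega> $ n $ i) borel (\<lambda>\<omega>. W \<omega> $ n $ i)"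
      by (intro indep_var_of_indep_set[OF indep sub] borel_measurable_vec_nth Y(1) W borel_measurable_nth)
    have Y_int: "integrable M (\<lambda>\<omega>. Y \<omega> $ n $ i)"
      using integrable_bounded_linear[OF _ Y(2), of "\<lambda>v. v $ n $ i"]
      by (simp add: bounded_linear_compose[OF bounded_linear_vec_nth bounded_linear_vec_nth])
    show ?thesis
      using indep_var_lebesgue_integral[OF indep_nth Y_int W_int] indep_var_integrable[OF indep_nth Y_int W_int]
        W_mean by simp
  qed
  show "integrable M (\<lambda>\<omega>. Y \<omega> \<bullet> W \<omega>)"
    unfolding inner using summand by auto
  show "expectation (\<lambda>\<omega>. Y \<omega> \<bullet> W \<omega>) = 0"
    unfolding inner using summand by (simp add: Bochner_Integration.integral_sum)
qed

lemma (in prob_space) expectation_le_of_nn_cond_exp_less: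
  fixes f :: "'a \<Rightarrow> real"
  assumes sub: "subalgebra M F" and f: "f \<in> borel_measurable M" "\<And>\<omega>. 0 \<le> f \<omega>" and "0 \<le> B"
    and cond: "AE \<omega> in M. nn_cond_exp M F (\<lambda>\<omega>. ennreal (f \<omega>)) \<omega> < ennreal B"
  shows "integrable M f" "expectation f \<le> B"
proof -
  interpret finite_measure_subalgebra M F
    by unfold_locales (fact sub)
  have "(\<integral>\<^sup>+\<omega>. ennreal (f \<omega>) \<partial>M) = (\<integral>\<^sup>+\<omega>. 1 * nn_cond_exp M F (\<lambda>\<omega>. ennreal (f \<omega>)) \<omega> \<partial>M)"
    using nn_cond_exp_intg[of "\<lambda>_. 1" "\<lambda>\<omega>. ennreal (f \<omega>)"] f(1) by simp
  also have "\<dots> \<le> (\<integral>\<^sup>+\<omega>. ennreal B \<partial>M)"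
    using cond by (intro nn_integral_mono_AE) auto
  finally have bound: "(\<integral>\<^sup>+\<omega>. ennreal (f \<omega>) \<partial>M) \<le> ennreal B"
    by (simp add: emeasure_space_1)
  then show int: "integrable M f"
    using f by (intro integrableI_nonneg) (auto simp: top.not_eq_extremum le_less_trans)
  have "ennreal (expectation f) = (\<integral>\<^sup>+\<omega>. ennreal (f \<omega>) \<partial>M)"
    using int f(2) by (simp add: nn_integral_eq_integral)
  with bound have "ennreal (expectation f) \<le> ennreal B"
    by (rule ord_eq_le_trans[rotated])
  then show "expectation f \<le> B"
    using ennreal_le_iff[OF \<open>0 \<le> B\<close>] by blast
qed

lemma (in finite_measure) integrable_of_integrable_norm_sq:
  fixes Y :: "'a \<Rightarrow> 'b::{banach, second_countable_topology}"
  assumes "Y \<in> borel_measurable M" "integrable M (\<lambda>\<omega>. (norm (Y \<omega>))\<^sup>2)"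
  shows "integrable M Y"
  using square_integrable_imp_integrable[of "\<lambda>\<omega>. norm (Y \<omega>)"] assms
  by (simp add: integrable_norm_iff)

lemma integrable_norm_sq_add:
  fixes f h :: "'a \<Rightarrow> 'b::{real_normed_vector, second_countable_topology}"
  assumes [measurable]: "f \<in> borel_measurable M" "h \<in> borel_measurable M"
    and "integrable M (\<lambda>\<omega>. (norm (f \<omega>))\<^sup>2)" "integrable M (\<lambda>\<omega>. (norm (h \<omega>))\<^sup>2)"
  shows "integrable M (\<lambda>\<omega>. (norm (f \<omega> + h \<omega>))\<^sup>2)"
proof (rule Bochner_Integration.integrable_bound)
  show "integrable M (\<lambda>\<omega>. 2 * (norm (f \<omega>))\<^sup>2 + 2 * (norm (h \<omega>))\<^sup>2)"
    using assms(3,4) by simp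
  have "(norm (f \<omega> + h \<omega>))\<^sup>2 \<le> 2 * (norm (f \<omega>))\<^sup>2 + 2 * (norm (h \<omega>))\<^sup>2" for \<omega>
  proof -
    have "(norm (f \<omega> + h \<omega>))\<^sup>2 \<le> (norm (f \<omega>) + norm (h \<omega>))\<^sup>2"
      by (intro power_mono norm_triangle_ineq) simp
    also have "\<dots> \<le> 2 * (norm (f \<omega>))\<^sup>2 + 2 * (norm (h \<omega>))\<^sup>2"
      by (rule sq_sum_le_twice_sum_sq)
    finally show ?thesis .
  qed
  then show "AE \<omega> in M. norm ((norm (f \<omega> + h \<omega>))\<^sup>2) \<le> norm (2 * (norm (f \<omega>))\<^sup>2 + 2 * (norm (h \<omega>))\<^sup>2)"
    by simp
qed simp

lemma (in finite_measure) integrable_norm_sq_linear_growth: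
  fixes f :: "'a \<Rightarrow> 'b::{real_normed_vector, second_countable_topology}"
    and h :: "'b \<Rightarrow> 'c::{real_normed_vector, second_countable_topology}"
  assumes [measurable]: "f \<in> borel_measurable M" "h \<in> borel_measurable borel"
    and f_int: "integrable M (\<lambda>\<omega>. (norm (f \<omega>))\<^sup>2)" and growth: "\<And>y. norm (h y) \<le> c * norm y + d"
  shows "integrable M (\<lambda>\<omega>. (norm (h (f \<omega>)))\<^sup>2)"
proof (rule Bochner_Integration.integrable_bound)
  show "integrable M (\<lambda>\<omega>. 2 * c\<^sup>2 * (norm (f \<omega>))\<^sup>2 + 2 * d\<^sup>2)"
    using f_int by simp
  have "(norm (h y))\<^sup>2 \<le> 2 * c\<^sup>2 * (norm y)\<^sup>2 + 2 * d\<^sup>2" for y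
  proof -
    have "(norm (h y))\<^sup>2 \<le> (\<bar>c * norm y + d\<bar>)\<^sup>2"
      using growth[of y] by (intro power_mono) auto
    also have "\<dots> \<le> 2 * c\<^sup>2 * (norm y)\<^sup>2 + 2 * d\<^sup>2"
      using sq_sum_le_twice_sum_sq[of "c * norm y" d] by (simp add: power_mult_distrib)
    finally show ?thesis .
  qed
  then show "AE \<omega> in M. norm ((norm (h (f \<omega>)))\<^sup>2) \<le> norm (2 * c\<^sup>2 * (norm (f \<omega>))\<^sup>2 + 2 * d\<^sup>2)"
    by simp
qed simp

lemma bdd_above_norm_div_powr:
  fixes X :: "nat \<Rightarrow> 'a::real_normed_vector"
  assumes "bdd_above (range (\<lambda>k. (norm (X (Suc k)))\<^sup>2 / real (Suc k) powr (2 * \<eta>)))"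
  shows "bdd_above ((\<lambda>t. norm (X t) / real t powr \<eta>) ` {1..})"
proof -
  obtain S where S: "\<And>k. (norm (X (Suc k)))\<^sup>2 / real (Suc k) powr (2 * \<eta>) \<le> S"
    using assms by (auto simp: bdd_above_def)
  have "norm (X t) / real t powr \<eta> \<le> sqrt S" if t: "1 \<le> t" for t
  proof -
    obtain k where k: "t = Suc k"
      using gr0_implies_Suc[of t] t by auto
    have "(real t powr \<eta>)\<^sup>2 = real t powr (2 * \<eta>)"
      by (simp add: power2_eq_square powr_add[symmetric])
    then have "(norm (X t) / real t powr \<eta>)\<^sup>2 = (norm (X (Suc k)))\<^sup>2 / real (Suc k) powr (2 * \<eta>)"
      by (simp add: k power_divide)
    then show ?thesis
      using S[of k] by (intro real_le_rsqrt) simp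
  qed
  then show ?thesis
    by (auto simp: bdd_above_def)
qed

lemma AE_bdd_above_of_summable_integrals:
  fixes Z :: "nat \<Rightarrow> 'a \<Rightarrow> real"
  assumes int: "\<And>k. integrable M (Z k)" and nonneg: "\<And>k \<omega>. 0 \<le> Z k \<omega>"
    and summable: "summable (\<lambda>k. \<integral>\<omega>. Z k \<omega> \<partial>M)"
  shows "AE \<omega> in M. bdd_above (range (\<lambda>k. Z k \<omega>))"
proof -
  have [measurable]: "Z k \<in> borel_measurable M" for k
    using int by simp
  have "(\<integral>\<^sup>+\<omega>. (\<Sum>k. ennreal (Z k \<omega>)) \<partial>M) = (\<Sum>k. \<integral>\<^sup>+\<omega>. ennreal (Z k \<omega>) \<partial>M)"
    by (rule nn_integral_suminf) simp
  also have "\<dots> = (\<Sum>k. ennreal (\<integral>\<omega>. Z k \<omega> \<partial>M))"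
    using int nonneg by (simp add: nn_integral_eq_integral)
  also have "\<dots> \<noteq> \<infinity>"
    unfolding infinity_ennreal_def
    using nonneg by (intro ennreal_suminf_neq_top[OF summable] Bochner_Integration.integral_nonneg) blast
  finally have "AE \<omega> in M. (\<Sum>k. ennreal (Z k \<omega>)) \<noteq> \<infinity>"
    by (intro nn_integral_PInf_AE) simp
  then show ?thesis
  proof eventually_elim
    case (elim \<omega>)
    have "Z k \<omega> \<le> enn2real (\<Sum>k. ennreal (Z k \<omega>))" for k
    proof -
      have "ennreal (Z k \<omega>) \<le> (\<Sum>k. ennreal (Z k \<omega>))"
        using sum_le_suminf[of "\<lambda>k. ennreal (Z k \<omega>)" "{k}"] by simp
      from enn2real_mono[OF this] show ?thesis
        using elim nonneg[of k \<omega>] by (simp add: top.not_eq_extremum)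
    qed
    then show ?case
      by (auto simp: bdd_above_def)
  qed
qed

lemma
  fixes M :: "'a measure" and x \<xi> w :: "nat \<Rightarrow> 'a \<Rightarrow> 'b::topological_space"
  shows space_nat_filtration: "space (nat_filtration M x \<xi> w t) = space M"
    and sets_nat_filtration: "sets (nat_filtration M x \<xi> w t) = sigma_sets (space M)
     ({x s -` A \<inter> space M | s A. 1 \<le> s \<and> s \<le> t \<and> A \<in> sets borel} \<union>
      {\<xi> s -` A \<inter> space M | s A. 1 \<le> s \<and> s < t \<and> A \<in> sets borel} \<union>
      {w s -` A \<inter> space M | s A. 1 \<le> s \<and> s < t \<and> A \<in> sets borel})"
  unfolding nat_filtration_def by (rule space_measure_of sets_measure_of; blast)+

lemma subalgebra_nat_filtration:
  fixes x \<xi> w :: "nat \<Rightarrow> 'a \<Rightarrow> 'b::topological_space"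
  assumes "\<And>s. 1 \<le> s \<Longrightarrow> x s \<in> borel_measurable M"
    and "\<And>s. 1 \<le> s \<Longrightarrow> \<xi> s \<in> borel_measurable M" and "\<And>s. 1 \<le> s \<Longrightarrow> w s \<in> borel_measurable M"
  shows "subalgebra M (nat_filtration M x \<xi> w t)"
  unfolding subalgebra_def space_nat_filtration sets_nat_filtration
proof (intro conjI refl sets.sigma_sets_subset Un_least)
  show "{x s -` A \<inter> space M | s A. 1 \<le> s \<and> s \<le> t \<and> A \<in> sets borel} \<subseteq> sets M"
    using measurable_sets[OF assms(1)] by blast
  show "{\<xi> s -` A \<inter> space M | s A. 1 \<le> s \<and> s < t \<and> A \<in> sets borel} \<subseteq> sets M"
    using measurable_sets[OF assms(2)] by blast
  show "{w s -` A \<inter> space M | s A. 1 \<le> s \<and> s < t \<and> A \<in> sets borel} \<subseteq> sets M"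
    using measurable_sets[OF assms(3)] by blast
qed

lemma measurable_nat_filtration:
  fixes x \<xi> w :: "nat \<Rightarrow> 'a \<Rightarrow> 'b::topological_space"
  assumes "1 \<le> s" "s \<le> t"
  shows "x s \<in> borel_measurable (nat_filtration M x \<xi> w t)"
proof (rule measurableI)
  fix A :: "'b set" assume "A \<in> sets borel"
  then have "x s -` A \<inter> space M \<in> {x s -` A \<inter> space M | s A. 1 \<le> s \<and> s \<le> t \<and> A \<in> sets borel}"
    using assms by blast
  then show "x s -` A \<inter> space (nat_filtration M x \<xi> w t) \<in> sets (nat_filtration M x \<xi> w t)"
    unfolding space_nat_filtration sets_nat_filtration by (intro sigma_sets.Basic UnI1)
qed simp

section \<open>The graph Laplacian\<close>

lemma kron_lap_nth:
  assumes "undirected_graph E"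
  shows "kron_lap (graph_laplacian E) X $ i = (\<Sum>m\<in>UNIV. if E i m then X $ i - X $ m else 0)"
proof -
  have no_loop: "\<not> E i i"
    using assms by (simp add: undirected_graph_def)
  have "kron_lap (graph_laplacian E) X $ i
      = (\<Sum>m\<in>UNIV. (if m = i then real (card {k. E i k}) *\<^sub>R X $ i else 0) + (if E i m then - X $ m else 0))"
    unfolding kron_lap_def by (auto simp: graph_laplacian_def no_loop intro!: sum.cong)
  also have "\<dots> = real (card {k. E i k}) *\<^sub>R X $ i - (\<Sum>m\<in>{m. E i m}. X $ m)"
    by (simp add: sum.distrib sum.If_cases sum_negf)
  also have "\<dots> = (\<Sum>m\<in>UNIV. if E i m then X $ i - X $ m else 0)"
    by (simp add: sum.If_cases sum_subtractf sum_constant_scaleR del: sum_constant)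
  finally show ?thesis .
qed

lemma kron_lap_quadratic_form:
  fixes X :: "real^'d^'n::finite"
  assumes "undirected_graph E"
  shows "2 * (X \<bullet> kron_lap (graph_laplacian E) X)
    = (\<Sum>i\<in>UNIV. \<Sum>m\<in>UNIV. if E i m then (norm (X $ i - X $ m))\<^sup>2 else 0)"
proof -
  define D where "D i m = (if E i m then X $ i - X $ m else 0)" for i m
  have antisym: "X $ m \<bullet> D m i = - (X $ m \<bullet> D i m)" for i m
    using assms by (simp add: D_def undirected_graph_def inner_diff_right)
  have form: "X \<bullet> kron_lap (graph_laplacian E) X = (\<Sum>i\<in>UNIV. \<Sum>m\<in>UNIV. X $ i \<bullet> D i m)"
    by (subst inner_vec_def) (simp add: kron_lap_nth[OF assms] D_def inner_sum_right)
  also have "\<dots> = (\<Sum>i\<in>UNIV. \<Sum>m\<in>UNIV. X $ m \<bullet> D m i)"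
    by (rule sum.swap)
  also have "\<dots> = - (\<Sum>i\<in>UNIV. \<Sum>m\<in>UNIV. X $ m \<bullet> D i m)"
    by (simp add: antisym sum_negf)
  finally have "2 * (X \<bullet> kron_lap (graph_laplacian E) X) = (\<Sum>i\<in>UNIV. \<Sum>m\<in>UNIV. (X $ i - X $ m) \<bullet> D i m)"
    using form by (simp add: sum_subtractf inner_diff_left)
  also have "\<dots> = (\<Sum>i\<in>UNIV. \<Sum>m\<in>UNIV. if E i m then (norm (X $ i - X $ m))\<^sup>2 else 0)"
    by (intro sum.cong) (auto simp: D_def power2_norm_eq_inner)
  finally show ?thesis .
qed

lemma kron_lap_quadratic_form_nonneg:
  fixes X :: "real^'d^'n::finite"
  assumes "undirected_graph E"
  shows "0 \<le> X \<bullet> kron_lap (graph_laplacian E) X"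
proof -
  have "0 \<le> (\<Sum>i\<in>UNIV. \<Sum>m\<in>UNIV. if E i m then (norm (X $ i - X $ m))\<^sup>2 else 0)"
    by (intro sum_nonneg) simp
  then show ?thesis
    using kron_lap_quadratic_form[OF assms, of X] by simp
qed

lemma norm_kron_lap_sq_le:
  fixes X :: "real^'d^'n::finite"
  assumes "undirected_graph E"
  shows "(norm (kron_lap (graph_laplacian E) X))\<^sup>2 \<le> 2 * real CARD('n) * (X \<bullet> kron_lap (graph_laplacian E) X)"
proof -
  define D where "D i m = (if E i m then X $ i - X $ m else 0)" for i m
  have "(norm (kron_lap (graph_laplacian E) X))\<^sup>2 = (\<Sum>i\<in>UNIV. (norm (\<Sum>m\<in>UNIV. D i m))\<^sup>2)"
    by (simp add: norm_vec_sq kron_lap_nth[OF assms] D_def)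
  also have "\<dots> \<le> (\<Sum>i\<in>UNIV. real CARD('n) * (\<Sum>m\<in>UNIV. (norm (D i m))\<^sup>2))"
  proof (rule sum_mono)
    fix i
    have "(norm (\<Sum>m\<in>UNIV. D i m))\<^sup>2 \<le> (\<Sum>m\<in>UNIV. norm (D i m))\<^sup>2"
      by (intro power_mono norm_sum) simp
    also have "\<dots> \<le> real CARD('n) * (\<Sum>m\<in>UNIV. (norm (D i m))\<^sup>2)"
      using sum_squared_le_sum_of_squares[of "\<lambda>m. norm (D i m)" UNIV] by (simp add: mult.commute)
    finally show "(norm (\<Sum>m\<in>UNIV. D i m))\<^sup>2 \<le> real CARD('n) * (\<Sum>m\<in>UNIV. (norm (D i m))\<^sup>2)" .
  qed
  also have "\<dots> = real CARD('n) * (\<Sum>i\<in>UNIV. \<Sum>m\<in>UNIV. if E i m then (norm (X $ i - X $ m))\<^sup>2 else 0)"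
    by (auto simp: sum_distrib_left D_def intro!: sum.cong)
  also have "\<dots> = 2 * real CARD('n) * (X \<bullet> kron_lap (graph_laplacian E) X)"
    by (simp add: kron_lap_quadratic_form[OF assms])
  finally show ?thesis .
qed

lemma norm_kron_lap_le:
  fixes X :: "real^'d^'n::finite"
  assumes "undirected_graph E"
  shows "norm (kron_lap (graph_laplacian E) X) \<le> 2 * real CARD('n) * norm X"
proof -
  let ?L = "kron_lap (graph_laplacian E) X"
  have "norm ?L * norm ?L \<le> 2 * real CARD('n) * (X \<bullet> ?L)"
    using norm_kron_lap_sq_le[OF assms] by (simp add: power2_eq_square)
  also have "\<dots> \<le> (2 * real CARD('n) * norm X) * norm ?L"
    using norm_cauchy_schwarz[of X ?L] by (simp add: mult_left_mono)
  finally show ?thesis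
    by (cases "norm ?L = 0") (auto simp: mult_le_cancel_right)
qed

lemma norm_consensus_step_le:
  fixes X :: "real^'d^'n::finite"
  assumes "undirected_graph E" "0 \<le> b" "b * real CARD('n) \<le> 1"
  shows "norm (X - b *\<^sub>R kron_lap (graph_laplacian E) X) \<le> norm X"
proof -
  let ?L = "kron_lap (graph_laplacian E) X"
  let ?Q = "X \<bullet> ?L"
  have "(norm (X - b *\<^sub>R ?L))\<^sup>2 = (norm X)\<^sup>2 - 2 * b * ?Q + b\<^sup>2 * (norm ?L)\<^sup>2"
    by (simp only: power2_norm_eq_inner)
      (simp add: inner_diff_left inner_diff_right power2_eq_square algebra_simps inner_commute)
  also have "b\<^sup>2 * (norm ?L)\<^sup>2 \<le> b\<^sup>2 * (2 * real CARD('n) * ?Q)"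
    by (intro mult_left_mono norm_kron_lap_sq_le[OF assms(1)]) auto
  also have "b\<^sup>2 * (2 * real CARD('n) * ?Q) = 2 * b * ?Q * (b * real CARD('n))"
    by (simp add: power2_eq_square)
  also have "\<dots> \<le> 2 * b * ?Q"
    using kron_lap_quadratic_form_nonneg[OF assms(1), of X] assms(2,3) by (simp add: mult_left_le)
  finally have "(norm (X - b *\<^sub>R ?L))\<^sup>2 \<le> (norm X)\<^sup>2"
    by simp
  then show ?thesis
    by (rule power2_le_imp_le) simp
qed

section \<open>The consensus-gradient drift\<close>

lemma inner_outward_field_lower_bound:
  fixes g :: "'n::finite \<Rightarrow> 'a::real_inner \<Rightarrow> 'a"
  assumes lip: "\<And>n. K-lipschitz_on UNIV (g n)" and outward: "\<And>n y. C1 \<le> norm y \<Longrightarrow> 0 \<le> y \<bullet> g n y"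
  obtains C where "0 \<le> C" "\<And>X. - C \<le> X \<bullet> (\<chi> n. g n (X $ n))"
proof -
  define R where "R = \<bar>C1\<bar>"
  have K: "0 \<le> K"
    using lip lipschitz_on_nonneg by blast
  have "- (R * (norm (g n 0) + K * R)) \<le> y \<bullet> g n y" for n y
  proof (cases "C1 \<le> norm y")
    case True
    have "0 \<le> R * (norm (g n 0) + K * R)"
      using K by (simp add: R_def)
    then show ?thesis
      using outward[OF True, of n] by linarith
  next
    case False
    then have y: "norm y \<le> R"
      by (simp add: R_def)
    have "\<bar>y \<bullet> g n y\<bar> \<le> norm y * (norm (g n 0) + K * norm y)"
      using Cauchy_Schwarz_ineq2[of y "g n y"] norm_le_lipschitz[OF lip, of n y]
      by (meson mult_left_mono norm_ge_zero order_trans)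
    also have "\<dots> \<le> R * (norm (g n 0) + K * R)"
      using y K by (intro mult_mono add_left_mono mult_left_mono) (auto simp: R_def)
    finally show ?thesis
      by linarith
  qed
  then have bound: "- (\<Sum>n\<in>UNIV. R * (norm (g n 0) + K * R)) \<le> X \<bullet> (\<chi> n. g n (X $ n))" for X :: "'a^'n"
    by (subst inner_vec_def) (simp add: sum_negf[symmetric] sum_mono)
  have "0 \<le> (\<Sum>n\<in>UNIV. R * (norm (g n 0) + K * R))"
    using K by (intro sum_nonneg) (simp add: R_def)
  then show thesis
    using bound by (rule that)
qed

lemma norm_consensus_gradient_step_sq_le:
  fixes X v :: "real^'d^'n::finite"
  assumes E: "undirected_graph E" and a: "0 \<le> a" and b: "0 \<le> b" "b * real CARD('n) \<le> 1"
    and inner: "- c \<le> X \<bullet> v"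
  shows "(norm (X - b *\<^sub>R kron_lap (graph_laplacian E) X - a *\<^sub>R v))\<^sup>2
    \<le> (1 + 2 * a * b * real CARD('n)) * (norm X)\<^sup>2 + 2 * a * c
      + (2 * a * b * real CARD('n) + a\<^sup>2) * (norm v)\<^sup>2"
proof -
  define N where "N = real CARD('n)"
  define L where "L = kron_lap (graph_laplacian E) X"
  define z where "z = X - b *\<^sub>R L"
  have z: "(norm z)\<^sup>2 \<le> (norm X)\<^sup>2"
    unfolding z_def L_def using norm_consensus_step_le[OF E b] by (rule power_mono) simp
  have "L \<bullet> v \<le> norm L * norm v"
    by (rule norm_cauchy_schwarz)
  also have "\<dots> \<le> (2 * N * norm X) * norm v"
    unfolding L_def N_def by (intro mult_right_mono norm_kron_lap_le[OF E]) simp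
  also have "\<dots> \<le> N * ((norm X)\<^sup>2 + (norm v)\<^sup>2)"
    using mult_left_mono[OF sum_squares_bound[of "norm X" "norm v"], of N] by (simp add: N_def ac_simps)
  finally have "b * (L \<bullet> v) \<le> b * (N * ((norm X)\<^sup>2 + (norm v)\<^sup>2))"
    using b(1) by (rule mult_left_mono)
  moreover have "- (z \<bullet> v) = - (X \<bullet> v) + b * (L \<bullet> v)"
    by (simp add: z_def inner_diff_left)
  ultimately have "- (z \<bullet> v) \<le> c + b * N * ((norm X)\<^sup>2 + (norm v)\<^sup>2)"
    using inner by (simp add: mult.assoc)
  then have zv: "2 * a * (- (z \<bullet> v)) \<le> 2 * a * (c + b * N * ((norm X)\<^sup>2 + (norm v)\<^sup>2))"
    using a by (intro mult_left_mono) simp_all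
  have "(norm (X - b *\<^sub>R L - a *\<^sub>R v))\<^sup>2 = (norm z)\<^sup>2 + 2 * a * (- (z \<bullet> v)) + a\<^sup>2 * (norm v)\<^sup>2"
    by (simp add: z_def norm_sq_diff_scaleR)
  also have "\<dots> \<le> (norm X)\<^sup>2 + 2 * a * (c + b * N * ((norm X)\<^sup>2 + (norm v)\<^sup>2)) + a\<^sup>2 * (norm v)\<^sup>2"
    using z zv by linarith
  also have "\<dots> = (1 + 2 * a * b * N) * (norm X)\<^sup>2 + 2 * a * c + (2 * a * b * N + a\<^sup>2) * (norm v)\<^sup>2"
    by (simp add: algebra_simps)
  finally show ?thesis
    by (simp add: L_def N_def)
qed

definition consensus_drift ::
  "('n::finite \<Rightarrow> 'n \<Rightarrow> bool) \<Rightarrow> ('n \<Rightarrow> real^'d \<Rightarrow> real^'d) \<Rightarrow> real \<Rightarrow> real \<Rightarrow> real^'d^'n \<Rightarrow> real^'d^'n"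
  where "consensus_drift E g b a X = X - b *\<^sub>R kron_lap (graph_laplacian E) X - a *\<^sub>R (\<chi> n. g n (X $ n))"

lemma consensus_drift_norm_sq_bound:
  fixes g :: "'n::finite \<Rightarrow> real^'d \<Rightarrow> real^'d"
  assumes lip: "\<And>n. K-lipschitz_on UNIV (g n)" and outward: "\<And>n y. C1 \<le> norm y \<Longrightarrow> 0 \<le> y \<bullet> g n y"
    and E: "undirected_graph E"
  obtains A C where "0 \<le> A" "0 \<le> C"
    and "\<And>b a X. 0 \<le> a \<Longrightarrow> 0 \<le> b \<Longrightarrow> b * real CARD('n) \<le> 1 \<Longrightarrow>
      (norm (consensus_drift E g b a X))\<^sup>2 \<le> (1 + A * (a * b + a\<^sup>2)) * (norm X)\<^sup>2 + C * (a + a * b + a\<^sup>2)"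
proof -
  obtain Cg where Cg: "0 \<le> Cg" "\<And>X. - Cg \<le> X \<bullet> (\<chi> n. g n (X $ n))"
    using inner_outward_field_lower_bound[of K g C1, OF lip outward] by blast
  define N where "N = real CARD('n)"
  define G where "G = norm (\<chi> n. g n ((0 :: real^'d^'n) $ n))"
  define A where "A = 2 * N + 4 * N * K\<^sup>2 + 2 * K\<^sup>2"
  define C where "C = 2 * Cg + 4 * N * G\<^sup>2 + 2 * G\<^sup>2"
  have "(norm (consensus_drift E g b a X))\<^sup>2 \<le> (1 + A * (a * b + a\<^sup>2)) * (norm X)\<^sup>2 + C * (a + a * b + a\<^sup>2)"
    if a: "0 \<le> a" and b: "0 \<le> b" "b * N \<le> 1" for a b and X :: "real^'d^'n"
  proof -
    define v where "v = (\<chi> n. g n (X $ n))"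
    have "norm v \<le> G + K * norm X"
      unfolding v_def G_def by (rule norm_le_lipschitz[OF lipschitz_on_vec_lambda_nth[OF lip]])
    then have "(norm v)\<^sup>2 \<le> (G + K * norm X)\<^sup>2"
      by (rule power_mono) simp
    then have v: "(norm v)\<^sup>2 \<le> 2 * G\<^sup>2 + 2 * K\<^sup>2 * (norm X)\<^sup>2"
      using sq_sum_le_twice_sum_sq[of G "K * norm X"] by (simp add: power_mult_distrib)
    have "(norm (consensus_drift E g b a X))\<^sup>2
        \<le> (1 + 2 * a * b * N) * (norm X)\<^sup>2 + 2 * a * Cg + (2 * a * b * N + a\<^sup>2) * (norm v)\<^sup>2"
      unfolding consensus_drift_def v_def N_def
      using norm_consensus_gradient_step_sq_le[OF E a b[unfolded N_def] Cg(2)] .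
    also have "\<dots> \<le> (1 + 2 * a * b * N) * (norm X)\<^sup>2 + 2 * a * Cg
        + (2 * a * b * N + a\<^sup>2) * (2 * G\<^sup>2 + 2 * K\<^sup>2 * (norm X)\<^sup>2)"
      using v a b by (intro add_left_mono mult_left_mono) (simp_all add: N_def)
    also have "\<dots> \<le> (1 + A * (a * b + a\<^sup>2)) * (norm X)\<^sup>2 + C * (a + a * b + a\<^sup>2)"
    proof -
      have "0 \<le> (a * b * (2 * K\<^sup>2) + a\<^sup>2 * (2 * N + 4 * N * K\<^sup>2)) * (norm X)\<^sup>2
          + a * (4 * N * G\<^sup>2 + 2 * G\<^sup>2) + a * b * (2 * Cg + 2 * G\<^sup>2) + a\<^sup>2 * (2 * Cg + 4 * N * G\<^sup>2)"
        using a b Cg(1) by (simp add: N_def)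
      then show ?thesis
        by (simp add: A_def C_def algebra_simps power2_eq_square)
    qed
    finally show ?thesis .
  qed
  moreover have "0 \<le> A" "0 \<le> C"
    using Cg(1) by (simp_all add: A_def C_def N_def)
  ultimately show thesis
    using that unfolding N_def by blast
qed

lemma norm_consensus_drift_le:
  fixes g :: "'n::finite \<Rightarrow> real^'d \<Rightarrow> real^'d"
  assumes lip: "\<And>n. K-lipschitz_on UNIV (g n)" and E: "undirected_graph E"
  shows "norm (consensus_drift E g b a X)
    \<le> (1 + \<bar>b\<bar> * (2 * real CARD('n)) + \<bar>a\<bar> * K) * norm X + \<bar>a\<bar> * norm (\<chi> n. g n ((0 :: real^'d^'n) $ n))"
proof -
  have "norm (consensus_drift E g b a X)
      \<le> norm X + \<bar>b\<bar> * norm (kron_lap (graph_laplacian E) X) + \<bar>a\<bar> * norm (\<chi> n. g n (X $ n))"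
    unfolding consensus_drift_def
    using norm_triangle_ineq4[of "X - b *\<^sub>R kron_lap (graph_laplacian E) X" "a *\<^sub>R (\<chi> n. g n (X $ n))"]
      norm_triangle_ineq4[of X "b *\<^sub>R kron_lap (graph_laplacian E) X"]
    by simp
  also have "\<dots> \<le> norm X + \<bar>b\<bar> * (2 * real CARD('n) * norm X)
      + \<bar>a\<bar> * (norm (\<chi> n. g n ((0 :: real^'d^'n) $ n)) + K * norm X)"
    using norm_kron_lap_le[OF E, of X] norm_le_lipschitz[OF lipschitz_on_vec_lambda_nth[OF lip], where y = X]
    by (intro add_mono mult_left_mono order_refl) auto
  finally show ?thesis
    by (simp add: algebra_simps)
qed

lemma borel_measurable_consensus_drift:
  fixes g :: "'n::finite \<Rightarrow> real^'d \<Rightarrow> real^'d"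
  assumes lip: "\<And>n. K-lipschitz_on UNIV (g n)"
  shows "consensus_drift E g b a \<in> borel_measurable borel"
proof -
  have "continuous_on UNIV (\<lambda>X::real^'d^'n. \<chi> n. g n (X $ n))"
    using lipschitz_on_continuous_on[OF lipschitz_on_vec_lambda_nth[OF lip]] .
  moreover have "continuous_on UNIV (kron_lap (graph_laplacian E) :: real^'d^'n \<Rightarrow> _)"
    unfolding kron_lap_def by (intro continuous_intros)
  ultimately have "continuous_on UNIV (consensus_drift E g b a)"
    unfolding consensus_drift_def by (intro continuous_on_diff continuous_on_scaleR continuous_on_const continuous_on_id)
  then show ?thesis
    by (rule borel_measurable_continuous_onI)
qed

section \<open>Step sizes and a discrete Gronwall inequality\<close>

lemma step_size_rates:
  fixes \<alpha> \<beta> \<gamma> :: "nat \<Rightarrow> real"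
  assumes "0 \<le> c\<alpha>" "0 \<le> c\<beta>"
    and "\<exists>T. \<forall>t\<ge>T. \<alpha> t = c\<alpha> / real t \<and> \<beta> t = c\<beta> / real t powr \<tau>
      \<and> \<gamma> t = c\<gamma> / (sqrt (real t) * sqrt (ln (ln (real t))))"
  shows "\<forall>\<^sub>F t in sequentially. 0 \<le> \<alpha> t \<and> \<alpha> t \<le> c\<alpha> / real t
    \<and> 0 \<le> \<beta> t \<and> \<beta> t \<le> c\<beta> * real t powr - \<tau> \<and> (\<gamma> t)\<^sup>2 \<le> c\<gamma>\<^sup>2 / real t"
proof -
  have "filterlim (\<lambda>t. ln (ln (real t))) at_top sequentially"
    by (intro filterlim_compose[OF ln_at_top] filterlim_real_sequentially)
  then have "\<forall>\<^sub>F t in sequentially. 1 \<le> ln (ln (real t))"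
    by (simp add: filterlim_at_top)
  moreover have "\<forall>\<^sub>F t in sequentially. \<alpha> t = c\<alpha> / real t \<and> \<beta> t = c\<beta> / real t powr \<tau>
      \<and> \<gamma> t = c\<gamma> / (sqrt (real t) * sqrt (ln (ln (real t))))"
    using assms(3) unfolding eventually_sequentially by blast
  ultimately show ?thesis
    using eventually_gt_at_top[of 0]
  proof eventually_elim
    case (elim t)
    then have "(\<gamma> t)\<^sup>2 = c\<gamma>\<^sup>2 / (real t * ln (ln (real t)))"
      by (simp add: power_divide power_mult_distrib)
    also have "\<dots> \<le> c\<gamma>\<^sup>2 / real t"
      using elim by (intro divide_left_mono) (auto intro: mult_left_le_one_le order_trans[OF _ mult_right_mono])
    finally show ?case
      using elim assms(1,2) by (simp add: powr_minus divide_inverse)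
  qed
qed

lemma step_size_powers:
  fixes t \<tau> a b ca cb :: real
  assumes t: "1 \<le> t" and a: "0 \<le> a" "a \<le> ca / t" and b: "0 \<le> b" "b \<le> cb * t powr - \<tau>"
  shows "0 \<le> ca" "0 \<le> cb" "a \<le> ca * t powr - 1" "a\<^sup>2 \<le> ca\<^sup>2 * t powr - 2"
    and "a * b \<le> ca * cb * t powr - (1 + \<tau>)"
proof -
  have t0: "0 < t"
    using t by simp
  have "0 \<le> ca / t" "0 \<le> cb * t powr - \<tau>"
    using a b by linarith+
  then show ca: "0 \<le> ca" and "0 \<le> cb"
    using t0 by (simp_all add: zero_le_divide_iff zero_le_mult_iff)
  show a_le: "a \<le> ca * t powr - 1"
    using a(2) t0 by (simp add: powr_minus_divide divide_inverse)
  have "t powr - 2 = 1 / t\<^sup>2"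
    using t0 by (simp add: powr_minus powr_numeral divide_inverse)
  then show "a\<^sup>2 \<le> ca\<^sup>2 * t powr - 2"
    using power_mono[OF a(2) a(1), of 2] by (simp add: power_divide)
  have "a * b \<le> (ca * t powr - 1) * (cb * t powr - \<tau>)"
    by (rule mult_mono[OF a_le b(2)]) (simp_all add: ca b(1))
  also have "\<dots> = ca * cb * t powr - (1 + \<tau>)"
    using powr_add[of t "- 1" "- \<tau>"] by (simp add: mult_ac)
  finally show "a * b \<le> ca * cb * t powr - (1 + \<tau>)" .
qed

lemma step_size_relative_error:
  fixes t \<delta> \<tau> a b A ca cb :: real
  assumes t: "1 \<le> t" and \<delta>: "0 < \<delta>" "\<delta> \<le> \<tau>" "\<delta> \<le> 1"
    and a: "0 \<le> a" "a \<le> ca / t" and b: "0 \<le> b" "b \<le> cb * t powr - \<tau>" and A: "0 \<le> A"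
  shows "(1 + t powr - (1 + \<delta>)) * (1 + A * (a * b + a\<^sup>2)) \<le> 1 + (1 + 2 * A * (ca * cb + ca\<^sup>2)) * t powr - (1 + \<delta>)"
proof -
  note powers = step_size_powers[OF t a b]
  define e where "e = t powr - (1 + \<delta>)"
  have e: "0 < e" "e \<le> 1"
    unfolding e_def using powr_mono[of "- (1 + \<delta>)" 0 t] \<delta> t by auto
  have "a * b + a\<^sup>2 \<le> (ca * cb + ca\<^sup>2) * e"
    using powers mult_left_mono[OF powr_mono[of "- (1 + \<tau>)" "- (1 + \<delta>)" t], of "ca * cb"]
      mult_left_mono[OF powr_mono[of "- 2" "- (1 + \<delta>)" t], of "ca\<^sup>2"] \<delta> t
    by (simp add: e_def algebra_simps)
  then have "(1 + e) * A * (a * b + a\<^sup>2) \<le> 2 * A * ((ca * cb + ca\<^sup>2) * e)"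
    using e A a b by (intro mult_mono) auto
  then show ?thesis
    unfolding e_def[symmetric] by (simp add: algebra_simps)
qed

lemma step_size_forcing:
  fixes t \<delta> \<tau> a b c C D B ca cb cc :: real
  assumes t: "1 \<le> t" and \<delta>: "0 < \<delta>" "\<delta> \<le> \<tau>"
    and a: "0 \<le> a" "a \<le> ca / t" and b: "0 \<le> b" "b \<le> cb * t powr - \<tau>" and c: "0 \<le> c" "c \<le> cc / t"
    and nonneg: "0 \<le> C" "0 \<le> D" "0 \<le> B"
  defines "e \<equiv> t powr - (1 + \<delta>)"
  shows "(1 + e) * (C * (a + a * b + a\<^sup>2) + c * D) + (1 + 1 / e) * (a\<^sup>2 * B)
    \<le> (2 * (C * (ca + ca * cb + ca\<^sup>2) + cc * D) + 2 * ca\<^sup>2 * B) * t powr (\<delta> - 1)"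
proof -
  note powers = step_size_powers[OF t a b]
  define q where "q = t powr (\<delta> - 1)"
  have e: "0 < e" "e \<le> 1"
    unfolding e_def using powr_mono[of "- (1 + \<delta>)" 0 t] \<delta> t by auto
  have "a + a * b + a\<^sup>2 \<le> (ca + ca * cb + ca\<^sup>2) * q"
    using powers mult_left_mono[OF powr_mono[of "- 1" "\<delta> - 1" t], of ca]
      mult_left_mono[OF powr_mono[of "- (1 + \<tau>)" "\<delta> - 1" t], of "ca * cb"]
      mult_left_mono[OF powr_mono[of "- 2" "\<delta> - 1" t], of "ca\<^sup>2"] \<delta> t
    by (simp add: q_def algebra_simps)
  then have "C * (a + a * b + a\<^sup>2) \<le> C * ((ca + ca * cb + ca\<^sup>2) * q)"
    using nonneg(1) by (rule mult_left_mono)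
  moreover have "c \<le> cc * q"
  proof -
    have "0 \<le> cc / t"
      using c by linarith
    then have cc: "0 \<le> cc"
      using t by (simp add: zero_le_divide_iff)
    have "c \<le> cc * t powr - 1"
      using c(2) t by (simp add: powr_minus_divide divide_inverse)
    also have "\<dots> \<le> cc * q"
      unfolding q_def using cc \<delta> t by (intro mult_left_mono powr_mono) auto
    finally show ?thesis .
  qed
  then have "c * D \<le> cc * q * D"
    using nonneg(2) by (rule mult_right_mono)
  ultimately have "C * (a + a * b + a\<^sup>2) + c * D \<le> (C * (ca + ca * cb + ca\<^sup>2) + cc * D) * q"
    by (simp add: algebra_simps)
  moreover have "0 \<le> C * (a + a * b + a\<^sup>2) + c * D"
    using a b c nonneg by simp
  ultimately have first: "(1 + e) * (C * (a + a * b + a\<^sup>2) + c * D) \<le> 2 * ((C * (ca + ca * cb + ca\<^sup>2) + cc * D) * q)"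
    using e by (intro mult_mono) auto
  have "(1 + 1 / e) * (a\<^sup>2 * B) \<le> (2 / e) * (a\<^sup>2 * B)"
    using e nonneg by (intro mult_right_mono) (auto simp: field_simps)
  also have "\<dots> \<le> 2 * B * (ca\<^sup>2 * (t powr - 2 / e))"
    using powers(4) e nonneg by (simp add: field_simps mult_left_mono)
  also have "t powr - 2 / e = q"
    unfolding e_def q_def using t by (simp add: powr_diff[symmetric])
  finally show ?thesis
    using first by (simp add: q_def algebra_simps)
qed

lemma powr_le_increment:
  fixes t \<delta> :: real
  assumes t: "1 \<le> t" and \<delta>: "0 < \<delta>" "\<delta> < 1"
  shows "t powr (\<delta> - 1) \<le> (2 / \<delta>) * ((t + 1) powr \<delta> - t powr \<delta>)"
proof -
  have "\<exists>z. t < z \<and> z < t + 1 \<and> (t + 1) powr \<delta> - t powr \<delta> = (t + 1 - t) * (\<delta> * z powr (\<delta> - 1))"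
    using t by (intro MVT2) (auto intro!: has_real_derivative_powr)
  then obtain z where z: "t < z" "z < t + 1" "(t + 1) powr \<delta> - t powr \<delta> = \<delta> * z powr (\<delta> - 1)"
    by auto
  have "t powr (\<delta> - 1) = (t / (t + 1)) powr (\<delta> - 1) * (t + 1) powr (\<delta> - 1)"
    using t by (simp add: powr_divide)
  also have "\<dots> \<le> 2 * z powr (\<delta> - 1)"
  proof (rule mult_mono)
    have "(t / (t + 1)) powr (\<delta> - 1) \<le> (1 / 2) powr (\<delta> - 1)"
      using t \<delta> by (intro powr_mono2') (auto simp: field_simps)
    also have "\<dots> \<le> (1 / 2) powr (-1)"
      using \<delta> by (intro powr_mono') auto
    finally show "(t / (t + 1)) powr (\<delta> - 1) \<le> 2"
      by (simp add: powr_minus)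
    show "(t + 1) powr (\<delta> - 1) \<le> z powr (\<delta> - 1)"
      using z t \<delta> by (intro powr_mono2') auto
  qed simp_all
  also have "\<dots> = (2 / \<delta>) * ((t + 1) powr \<delta> - t powr \<delta>)"
    using z(3) \<delta> by simp
  finally show ?thesis .
qed

lemma perturbed_recursion_prod_bound:
  fixes u r :: "nat \<Rightarrow> real"
  assumes \<delta>: "0 < \<delta>" "\<delta> < 1" and T: "1 \<le> T" and r: "\<And>t. 0 \<le> r t" and C: "0 \<le> C"
    and recursive: "\<And>t. T \<le> t \<Longrightarrow> u (Suc t) \<le> (1 + r t) * u t + C * real t powr (\<delta> - 1)"
    and t: "T \<le> t"
  shows "u t \<le> (\<Prod>s\<in>{T..<t}. 1 + r s) * (max 0 (u T) + 2 * C / \<delta> * real t powr \<delta>)"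
  using t
proof (induction t rule: dec_induct)
  case base
  have "0 \<le> 2 * C / \<delta> * real T powr \<delta>"
    using C \<delta> by simp
  then show ?case
    by simp
next
  case (step t)
  define P where "P t = (\<Prod>s\<in>{T..<t}. 1 + r s)" for t
  have P_Suc: "P (Suc t) = (1 + r t) * P t"
    unfolding P_def using step(1) by (simp add: prod.atLeastLessThan_Suc mult.commute)
  have P_ge_1: "1 \<le> P (Suc t)"
    unfolding P_def using r by (intro prod_ge_1) (simp add: add_increasing)
  have "(1 + r t) * u t \<le> (1 + r t) * (P t * (max 0 (u T) + 2 * C / \<delta> * real t powr \<delta>))"
    using r[of t] step.IH by (intro mult_left_mono) (simp_all add: P_def)
  then have "u (Suc t) \<le> P (Suc t) * (max 0 (u T) + 2 * C / \<delta> * real t powr \<delta>) + C * real t powr (\<delta> - 1)"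
    using recursive[OF step(1)] by (simp add: P_Suc mult.assoc)
  also have "C * real t powr (\<delta> - 1) \<le> P (Suc t) * (2 * C / \<delta> * ((real t + 1) powr \<delta> - real t powr \<delta>))"
  proof -
    define X where "X = 2 * C / \<delta> * ((real t + 1) powr \<delta> - real t powr \<delta>)"
    have t1: "1 \<le> real t"
      using step(1) T by simp
    have inc: "C * real t powr (\<delta> - 1) \<le> X"
      using mult_left_mono[OF powr_le_increment[OF t1 \<delta>] C] by (simp add: X_def algebra_simps)
    moreover have "0 \<le> C * real t powr (\<delta> - 1)"
      using C by simp
    ultimately have "X \<le> P (Suc t) * X"
      using mult_right_mono[OF P_ge_1, of X] by simp
    with inc show ?thesis
      unfolding X_def by linarith
  qed
  finally show ?case
    by (simp add: P_def algebra_simps add.commute)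
qed

lemma discrete_gronwall_powr:
  fixes u r :: "nat \<Rightarrow> real"
  assumes \<delta>: "0 < \<delta>" "\<delta> < 1" and T: "1 \<le> T"
    and r: "\<And>t. 0 \<le> r t" "summable r" and C: "0 \<le> C"
    and recursive: "\<And>t. T \<le> t \<Longrightarrow> u (Suc t) \<le> (1 + r t) * u t + C * real t powr (\<delta> - 1)"
  shows "\<exists>Q. \<forall>t\<ge>T. u t \<le> Q * real t powr \<delta>"
proof (intro exI allI impI)
  fix t assume t: "T \<le> t"
  define W where "W = max 0 (u T) + 2 * C / \<delta>"
  have "(\<Prod>s\<in>{T..<t}. 1 + r s) \<le> exp (\<Sum>s\<in>{T..<t}. r s)"
    using r(1) by (rule prod_le_exp_sum)
  also have "\<dots> \<le> exp (suminf r)"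
    using r by (simp add: sum_le_suminf)
  finally have P: "(\<Prod>s\<in>{T..<t}. 1 + r s) \<le> exp (suminf r)" .
  have "1 \<le> real t powr \<delta>"
    using t T \<delta> by (simp add: ge_one_powr_ge_zero)
  then have "max 0 (u T) + 2 * C / \<delta> * real t powr \<delta> \<le> W * real t powr \<delta>"
    unfolding W_def by (simp add: algebra_simps mult_le_cancel_left1)
  then have "(\<Prod>s\<in>{T..<t}. 1 + r s) * (max 0 (u T) + 2 * C / \<delta> * real t powr \<delta>)
      \<le> exp (suminf r) * (W * real t powr \<delta>)"
    using P C \<delta> r(1) by (intro mult_mono) (auto intro: prod_nonneg add_nonneg_nonneg)
  with perturbed_recursion_prod_bound[OF \<delta> T r(1) C recursive t]
  show "u t \<le> (exp (suminf r) * W) * real t powr \<delta>"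
    by (simp add: mult.assoc)
qed

section \<open>Second moments of the iterates\<close>

locale noisy_consensus = prob_space M for M :: "'a measure" +
  fixes g :: "'n::finite \<Rightarrow> real^'d::finite \<Rightarrow> real^'d" and K C1 B :: real
    and E :: "'n \<Rightarrow> 'n \<Rightarrow> bool"
    and x \<xi> w :: "nat \<Rightarrow> 'a \<Rightarrow> real^'d^'n"
    and \<alpha> \<beta> \<gamma> :: "nat \<Rightarrow> real"
  assumes lipschitz: "\<And>n. K-lipschitz_on UNIV (g n)"
    and outward: "\<And>n y. C1 \<le> norm y \<Longrightarrow> 0 \<le> y \<bullet> g n y"
    and undirected: "undirected_graph E"
    and measurable_noise: "\<And>t. \<xi> t \<in> borel_measurable M"
    and measurable_gaussian: "\<And>t. w t \<in> borel_measurable M"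
    and initial: "\<exists>x1. \<forall>\<omega>\<in>space M. x 1 \<omega> = x1"
    and recursion: "\<And>t \<omega>. 1 \<le> t \<Longrightarrow> \<omega> \<in> space M \<Longrightarrow>
      x (Suc t) \<omega> = x t \<omega> - \<beta> t *\<^sub>R kron_lap (graph_laplacian E) (x t \<omega>)
        - \<alpha> t *\<^sub>R ((\<chi> n. g n (x t \<omega> $ n)) + \<xi> t \<omega>) + \<gamma> t *\<^sub>R w t \<omega>"
    and B_nonneg: "0 \<le> B"
    and noise_variance: "\<And>t. 1 \<le> t \<Longrightarrow>
      AE \<omega> in M. nn_cond_exp M (nat_filtration M x \<xi> w t) (\<lambda>\<omega>. ennreal ((norm (\<xi> t \<omega>))\<^sup>2)) \<omega> < ennreal B"
    and gaussian: "\<And>t n. 1 \<le> t \<Longrightarrow>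
      distributed M lborel (\<lambda>\<omega>. w t \<omega> $ n) (\<lambda>v. ennreal (\<Prod>i\<in>UNIV. std_normal_density (v $ i)))"
    and gaussian_indep_past: "\<And>t n. 1 \<le> t \<Longrightarrow> indep_set (sets (nat_filtration M x \<xi> w t))
      {(\<lambda>\<omega>. w t \<omega> $ n) -` A \<inter> space M | A. A \<in> sets (borel :: (real^'d) measure)}"
begin

abbreviation "drift t \<equiv> consensus_drift E g (\<beta> t) (\<alpha> t)"

abbreviation "second_moment t \<equiv> expectation (\<lambda>\<omega>. (norm (x t \<omega>))\<^sup>2)"

lemma x_Suc:
  "1 \<le> t \<Longrightarrow> \<omega> \<in> space M \<Longrightarrow> x (Suc t) \<omega> = drift t (x t \<omega>) + (- \<alpha> t) *\<^sub>R \<xi> t \<omega> + \<gamma> t *\<^sub>R w t \<omega>"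
  by (simp add: recursion consensus_drift_def scaleR_add_right)

lemma measurable_drift [measurable]: "drift t \<in> borel_measurable borel"
  by (rule borel_measurable_consensus_drift[OF lipschitz])

lemma measurable_x: "1 \<le> t \<Longrightarrow> x t \<in> borel_measurable M"
proof (induction t rule: dec_induct)
  case base
  from initial obtain x1 where "\<forall>\<omega>\<in>space M. x 1 \<omega> = x1" ..
  then show ?case
    by (subst measurable_cong[where g = "\<lambda>_. x1"]) auto
next
  case (step t)
  note [measurable] = step.IH measurable_noise measurable_gaussian
  have "(\<lambda>\<omega>. drift t (x t \<omega>) + (- \<alpha> t) *\<^sub>R \<xi> t \<omega> + \<gamma> t *\<^sub>R w t \<omega>) \<in> borel_measurable M"
    by measurable
  then show ?case
    using x_Suc[OF step(1)] by (subst measurable_cong) auto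
qed

abbreviation "history t \<equiv> nat_filtration M x \<xi> w t"

lemma subalgebra_history: "subalgebra M (history t)"
  using measurable_x measurable_noise measurable_gaussian by (rule subalgebra_nat_filtration)

lemma noise_second_moment:
  assumes "1 \<le> t"
  shows "integrable M (\<lambda>\<omega>. (norm (\<xi> t \<omega>))\<^sup>2)" "expectation (\<lambda>\<omega>. (norm (\<xi> t \<omega>))\<^sup>2) \<le> B"
  using expectation_le_of_nn_cond_exp_less[OF subalgebra_history _ _ B_nonneg noise_variance[OF assms]]
    measurable_noise by auto

lemma gaussian_moments:
  assumes "1 \<le> t"
  shows "integrable M (\<lambda>\<omega>. w t \<omega> $ n $ i)" "expectation (\<lambda>\<omega>. w t \<omega> $ n $ i) = 0"
    and "integrable M (\<lambda>\<omega>. (norm (w t \<omega>))\<^sup>2)"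
    and "expectation (\<lambda>\<omega>. (norm (w t \<omega>))\<^sup>2) = real CARD('n) * real CARD('d)"
  using std_normal_vec_nth_moments[OF gaussian[OF assms]] std_normal_blocks_norm_sq[OF gaussian[OF assms]]
  by auto

lemma integrable_norm_sq_drift:
  assumes "1 \<le> t" "integrable M (\<lambda>\<omega>. (norm (x t \<omega>))\<^sup>2)"
  shows "integrable M (\<lambda>\<omega>. (norm (drift t (x t \<omega>)))\<^sup>2)"
  using measurable_x[OF assms(1)] measurable_drift assms(2) norm_consensus_drift_le[OF lipschitz undirected]
  by (rule integrable_norm_sq_linear_growth)

lemma integrable_norm_sq_x: "1 \<le> t \<Longrightarrow> integrable M (\<lambda>\<omega>. (norm (x t \<omega>))\<^sup>2)"
proof (induction t rule: dec_induct)
  case base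
  from initial obtain x1 where "\<forall>\<omega>\<in>space M. x 1 \<omega> = x1" ..
  then show ?case
    by (subst Bochner_Integration.integrable_cong[where g = "\<lambda>_. (norm x1)\<^sup>2"]) auto
next
  case (step t)
  note [measurable] = measurable_x[OF step(1)] measurable_noise measurable_gaussian
  have "integrable M (\<lambda>\<omega>. (norm (drift t (x t \<omega>) + (- \<alpha> t) *\<^sub>R \<xi> t \<omega> + \<gamma> t *\<^sub>R w t \<omega>))\<^sup>2)"
    using integrable_norm_sq_drift[OF step(1) step.IH] noise_second_moment(1)[OF step(1)]
      gaussian_moments(3)[OF step(1)]
    by (intro integrable_norm_sq_add) (simp_all add: power_mult_distrib)
  then show ?case
    using x_Suc[OF step(1)] by (subst Bochner_Integration.integrable_cong) auto
qed

lemma second_moment_step: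
  assumes t: "1 \<le> t" and e: "0 < e"
  shows "second_moment (Suc t) \<le> (1 + e) * (expectation (\<lambda>\<omega>. (norm (drift t (x t \<omega>)))\<^sup>2)
      + (\<gamma> t)\<^sup>2 * (real CARD('n) * real CARD('d))) + (1 + 1 / e) * ((\<alpha> t)\<^sup>2 * B)"
proof -
  define Y where "Y \<omega> = drift t (x t \<omega>)" for \<omega>
  note [measurable] = measurable_x[OF t] measurable_noise measurable_gaussian
  have Y_sq: "integrable M (\<lambda>\<omega>. (norm (Y \<omega>))\<^sup>2)"
    unfolding Y_def by (rule integrable_norm_sq_drift[OF t integrable_norm_sq_x[OF t]])
  have Y_history: "Y \<in> borel_measurable (history t)"
    unfolding Y_def using measurable_nat_filtration[OF t order_refl] by measurable
  have "Y \<in> borel_measurable M"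
    unfolding Y_def by measurable
  then have Y_int: "integrable M Y"
    using Y_sq by (rule integrable_of_integrable_norm_sq)
  note cross = expectation_inner_indep_zero[OF subalgebra_history Y_history Y_int measurable_gaussian
      gaussian_indep_past[OF t] gaussian_moments(1,2)[OF t]]
  define R where "R \<omega> = (1 + e) * ((norm (Y \<omega>))\<^sup>2 + 2 * \<gamma> t * (Y \<omega> \<bullet> w t \<omega>) + (\<gamma> t)\<^sup>2 * (norm (w t \<omega>))\<^sup>2)
      + (1 + 1 / e) * ((\<alpha> t)\<^sup>2 * (norm (\<xi> t \<omega>))\<^sup>2)" for \<omega>
  have pointwise: "(norm (x (Suc t) \<omega>))\<^sup>2 \<le> R \<omega>" if "\<omega> \<in> space M" for \<omega>
  proof -
    have "(norm (x (Suc t) \<omega>))\<^sup>2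
        \<le> (1 + e) * (norm (Y \<omega> + \<gamma> t *\<^sub>R w t \<omega>))\<^sup>2 + (1 + 1 / e) * (norm ((- \<alpha> t) *\<^sub>R \<xi> t \<omega>))\<^sup>2"
      using norm_add_sq_le_weighted[OF e, of "Y \<omega> + \<gamma> t *\<^sub>R w t \<omega>" "(- \<alpha> t) *\<^sub>R \<xi> t \<omega>"]
      by (simp add: x_Suc[OF t that] Y_def algebra_simps)
    also have "\<dots> = R \<omega>"
      using norm_sq_diff_scaleR[of "Y \<omega>" "- \<gamma> t" "w t \<omega>"] by (simp add: R_def power_mult_distrib)
    finally show ?thesis .
  qed
  have "integrable M R"
    unfolding R_def using Y_sq cross(1) gaussian_moments(3)[OF t] noise_second_moment(1)[OF t] by auto
  then have "second_moment (Suc t) \<le> expectation R"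
    using integrable_norm_sq_x[of "Suc t"] t pointwise by (intro integral_mono) auto
  also have "\<dots> = (1 + e) * (expectation (\<lambda>\<omega>. (norm (Y \<omega>))\<^sup>2) + (\<gamma> t)\<^sup>2 * (real CARD('n) * real CARD('d)))
      + (1 + 1 / e) * ((\<alpha> t)\<^sup>2 * expectation (\<lambda>\<omega>. (norm (\<xi> t \<omega>))\<^sup>2))"
    unfolding R_def using Y_sq cross gaussian_moments(3,4)[OF t] noise_second_moment(1)[OF t]
    by (simp add: Bochner_Integration.integral_add)
  also have "\<dots> \<le> (1 + e) * (expectation (\<lambda>\<omega>. (norm (Y \<omega>))\<^sup>2) + (\<gamma> t)\<^sup>2 * (real CARD('n) * real CARD('d)))
      + (1 + 1 / e) * ((\<alpha> t)\<^sup>2 * B)"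
    using noise_second_moment(2)[OF t] e by (intro add_left_mono mult_left_mono) simp_all
  finally show ?thesis
    by (simp add: Y_def)
qed

lemma expectation_drift_le:
  obtains A C where "0 \<le> A" "0 \<le> C"
    and "\<And>t. 1 \<le> t \<Longrightarrow> 0 \<le> \<alpha> t \<Longrightarrow> 0 \<le> \<beta> t \<Longrightarrow> \<beta> t * real CARD('n) \<le> 1 \<Longrightarrow>
      expectation (\<lambda>\<omega>. (norm (drift t (x t \<omega>)))\<^sup>2)
        \<le> (1 + A * (\<alpha> t * \<beta> t + (\<alpha> t)\<^sup>2)) * second_moment t + C * (\<alpha> t + \<alpha> t * \<beta> t + (\<alpha> t)\<^sup>2)"
proof -
  obtain A C where AC: "0 \<le> A" "0 \<le> C" and drift_bound: "\<And>b a X. 0 \<le> a \<Longrightarrow> 0 \<le> b \<Longrightarrow>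
      b * real CARD('n) \<le> 1 \<Longrightarrow>
      (norm (consensus_drift E g b a X))\<^sup>2 \<le> (1 + A * (a * b + a\<^sup>2)) * (norm X)\<^sup>2 + C * (a + a * b + a\<^sup>2)"
    using consensus_drift_norm_sq_bound[of K g C1, OF lipschitz outward undirected] by blast
  have "expectation (\<lambda>\<omega>. (norm (drift t (x t \<omega>)))\<^sup>2)
      \<le> (1 + A * (\<alpha> t * \<beta> t + (\<alpha> t)\<^sup>2)) * second_moment t + C * (\<alpha> t + \<alpha> t * \<beta> t + (\<alpha> t)\<^sup>2)"
    if t: "1 \<le> t" "0 \<le> \<alpha> t" "0 \<le> \<beta> t" "\<beta> t * real CARD('n) \<le> 1" for t
  proof -
    have "expectation (\<lambda>\<omega>. (norm (drift t (x t \<omega>)))\<^sup>2)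
        \<le> expectation (\<lambda>\<omega>. (1 + A * (\<alpha> t * \<beta> t + (\<alpha> t)\<^sup>2)) * (norm (x t \<omega>))\<^sup>2
          + C * (\<alpha> t + \<alpha> t * \<beta> t + (\<alpha> t)\<^sup>2))"
      using t drift_bound integrable_norm_sq_drift integrable_norm_sq_x
      by (intro integral_mono) auto
    also have "\<dots> = (1 + A * (\<alpha> t * \<beta> t + (\<alpha> t)\<^sup>2)) * second_moment t + C * (\<alpha> t + \<alpha> t * \<beta> t + (\<alpha> t)\<^sup>2)"
      using integrable_norm_sq_x t by (simp add: prob_space)
    finally show ?thesis .
  qed
  then show thesis
    by (rule that[OF AC])
qed

lemma second_moment_recursion:
  assumes \<delta>: "0 < \<delta>" "\<delta> \<le> \<tau>" "\<delta> \<le> 1" and c: "0 \<le> c\<alpha>" "0 \<le> c\<beta>" "0 \<le> c\<gamma>"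
  obtains R S where "0 \<le> R" "0 \<le> S"
    and "\<And>t. 1 \<le> t \<Longrightarrow> 0 \<le> \<alpha> t \<Longrightarrow> \<alpha> t \<le> c\<alpha> / real t \<Longrightarrow> 0 \<le> \<beta> t \<Longrightarrow> \<beta> t \<le> c\<beta> * real t powr - \<tau> \<Longrightarrow>
      (\<gamma> t)\<^sup>2 \<le> c\<gamma> / real t \<Longrightarrow> \<beta> t * real CARD('n) \<le> 1 \<Longrightarrow>
      second_moment (Suc t) \<le> (1 + R * real t powr - (1 + \<delta>)) * second_moment t + S * real t powr (\<delta> - 1)"
proof -
  obtain A C where AC: "0 \<le> A" "0 \<le> C" and drift: "\<And>t. 1 \<le> t \<Longrightarrow> 0 \<le> \<alpha> t \<Longrightarrow> 0 \<le> \<beta> t \<Longrightarrow>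
      \<beta> t * real CARD('n) \<le> 1 \<Longrightarrow> expectation (\<lambda>\<omega>. (norm (drift t (x t \<omega>)))\<^sup>2)
        \<le> (1 + A * (\<alpha> t * \<beta> t + (\<alpha> t)\<^sup>2)) * second_moment t + C * (\<alpha> t + \<alpha> t * \<beta> t + (\<alpha> t)\<^sup>2)"
    using expectation_drift_le by blast
  define D where "D = real CARD('n) * real CARD('d)"
  define R where "R = 1 + 2 * A * (c\<alpha> * c\<beta> + c\<alpha>\<^sup>2)"
  define S where "S = 2 * (C * (c\<alpha> + c\<alpha> * c\<beta> + c\<alpha>\<^sup>2) + c\<gamma> * D) + 2 * c\<alpha>\<^sup>2 * B"
  have "second_moment (Suc t) \<le> (1 + R * real t powr - (1 + \<delta>)) * second_moment t + S * real t powr (\<delta> - 1)"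
    if t: "1 \<le> t" "0 \<le> \<alpha> t" "\<alpha> t \<le> c\<alpha> / real t" "0 \<le> \<beta> t" "\<beta> t \<le> c\<beta> * real t powr - \<tau>"
      "(\<gamma> t)\<^sup>2 \<le> c\<gamma> / real t" "\<beta> t * real CARD('n) \<le> 1" for t
  proof -
    \<comment> \<open>Young's inequality with weight e = t^-(1+\<delta>): the relative error e stays summable, while
      the martingale noise \<xi> only contributes (\<alpha> t)^2 / e = O(t^(\<delta>-1)).\<close>
    let ?e = "real t powr - (1 + \<delta>)"
    have "second_moment (Suc t) \<le> (1 + ?e) * (expectation (\<lambda>\<omega>. (norm (drift t (x t \<omega>)))\<^sup>2)
        + (\<gamma> t)\<^sup>2 * D) + (1 + 1 / ?e) * ((\<alpha> t)\<^sup>2 * B)"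
      using second_moment_step[of t ?e] t by (simp add: D_def)
    also have "\<dots> \<le> (1 + ?e) * ((1 + A * (\<alpha> t * \<beta> t + (\<alpha> t)\<^sup>2)) * second_moment t
        + (C * (\<alpha> t + \<alpha> t * \<beta> t + (\<alpha> t)\<^sup>2) + (\<gamma> t)\<^sup>2 * D)) + (1 + 1 / ?e) * ((\<alpha> t)\<^sup>2 * B)"
      using drift[OF t(1,2,4,7)] by (intro add_right_mono mult_left_mono) simp_all
    also have "\<dots> = ((1 + ?e) * (1 + A * (\<alpha> t * \<beta> t + (\<alpha> t)\<^sup>2))) * second_moment t
        + ((1 + ?e) * (C * (\<alpha> t + \<alpha> t * \<beta> t + (\<alpha> t)\<^sup>2) + (\<gamma> t)\<^sup>2 * D) + (1 + 1 / ?e) * ((\<alpha> t)\<^sup>2 * B))"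
      by (simp add: algebra_simps)
    also have "\<dots> \<le> (1 + R * real t powr - (1 + \<delta>)) * second_moment t + S * real t powr (\<delta> - 1)"
      using step_size_relative_error[of "real t" \<delta> \<tau> "\<alpha> t" c\<alpha> "\<beta> t" c\<beta> A]
        step_size_forcing[of "real t" \<delta> \<tau> "\<alpha> t" c\<alpha> "\<beta> t" c\<beta> "(\<gamma> t)\<^sup>2" c\<gamma> C D B] t \<delta> AC B_nonneg
      by (intro add_mono mult_right_mono) (simp_all add: R_def S_def D_def)
    finally show ?thesis .
  qed
  moreover have "0 \<le> R" "0 \<le> S"
    using AC c B_nonneg by (simp_all add: R_def S_def D_def)
  ultimately show thesis
    using that by blast
qed

lemma second_moment_growth:
  assumes \<delta>: "0 < \<delta>" "\<delta> \<le> \<tau>" "\<delta> < 1" and c: "0 \<le> c\<alpha>" "0 \<le> c\<beta>" "0 \<le> c\<gamma>"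
    and rates: "\<forall>\<^sub>F t in sequentially. 0 \<le> \<alpha> t \<and> \<alpha> t \<le> c\<alpha> / real t
      \<and> 0 \<le> \<beta> t \<and> \<beta> t \<le> c\<beta> * real t powr - \<tau> \<and> (\<gamma> t)\<^sup>2 \<le> c\<gamma> / real t"
  shows "\<exists>Q. \<forall>\<^sub>F t in sequentially. second_moment t \<le> Q * real t powr \<delta>"
proof -
  define N where "N = real CARD('n)"
  obtain R S where RS: "0 \<le> R" "0 \<le> S" and recursion_bound: "\<And>t. 1 \<le> t \<Longrightarrow> 0 \<le> \<alpha> t \<Longrightarrow>
      \<alpha> t \<le> c\<alpha> / real t \<Longrightarrow> 0 \<le> \<beta> t \<Longrightarrow> \<beta> t \<le> c\<beta> * real t powr - \<tau> \<Longrightarrow> (\<gamma> t)\<^sup>2 \<le> c\<gamma> / real t \<Longrightarrow>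
      \<beta> t * N \<le> 1 \<Longrightarrow>
      second_moment (Suc t) \<le> (1 + R * real t powr - (1 + \<delta>)) * second_moment t + S * real t powr (\<delta> - 1)"
    using second_moment_recursion[of \<delta> \<tau> c\<alpha> c\<beta> c\<gamma>] \<delta> c unfolding N_def by auto
  have "((\<lambda>t. c\<beta> * real t powr - \<tau>) \<longlongrightarrow> 0) sequentially"
    using \<delta> by (intro tendsto_mult_right_zero tendsto_neg_powr filterlim_real_sequentially) auto
  then have "\<forall>\<^sub>F t in sequentially. c\<beta> * real t powr - \<tau> < 1 / N"
    by (rule order_tendstoD) (simp add: N_def)
  with rates have "\<forall>\<^sub>F t in sequentially. second_moment (Suc t)
      \<le> (1 + R * real t powr - (1 + \<delta>)) * second_moment t + S * real t powr (\<delta> - 1)"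
    using eventually_ge_at_top[of 1]
  proof eventually_elim
    case (elim t)
    then have "\<beta> t * N \<le> c\<beta> * real t powr - \<tau> * N"
      by (intro mult_right_mono) (simp_all add: N_def)
    also have "\<dots> \<le> 1"
      using elim by (simp add: N_def field_simps)
    finally show ?case
      using elim by (intro recursion_bound) simp_all
  qed
  then obtain T where "\<And>t. T \<le> t \<Longrightarrow> second_moment (Suc t)
      \<le> (1 + R * real t powr - (1 + \<delta>)) * second_moment t + S * real t powr (\<delta> - 1)"
    unfolding eventually_sequentially by blast
  then have "\<exists>Q. \<forall>t\<ge>Suc T. second_moment t \<le> Q * real t powr \<delta>"
    using \<delta> RS by (intro discrete_gronwall_powr[where r = "\<lambda>t. R * real t powr - (1 + \<delta>)" and C = S])
      (simp_all add: summable_real_powr_iff)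
  then show ?thesis
    unfolding eventually_sequentially by blast
qed

lemma AE_bdd_above_growth:
  assumes \<delta>: "\<delta> < 2 * \<eta> - 1" and Q: "\<forall>\<^sub>F t in sequentially. second_moment t \<le> Q * real t powr \<delta>"
  shows "AE \<omega> in M. bdd_above ((\<lambda>t. norm (x t \<omega>) / real t powr \<eta>) ` {1..})"
proof -
  define Z where "Z k \<omega> = (norm (x (Suc k) \<omega>))\<^sup>2 / real (Suc k) powr (2 * \<eta>)" for k \<omega>
  have Z_int: "integrable M (Z k)" for k
    unfolding Z_def using integrable_norm_sq_x[of "Suc k"] by simp
  have Z_nonneg: "0 \<le> Z k \<omega>" for k \<omega>
    unfolding Z_def by simp
  obtain T where T: "\<And>t. T \<le> t \<Longrightarrow> second_moment t \<le> Q * real t powr \<delta>"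
    using Q unfolding eventually_sequentially by blast
  have "summable (\<lambda>k. expectation (Z k))"
  proof (rule summable_comparison_test')
    show "summable (\<lambda>k. Q * real (Suc k) powr (\<delta> - 2 * \<eta>))"
      using \<delta> summable_Suc_iff[of "\<lambda>k. real k powr (\<delta> - 2 * \<eta>)"]
      by (intro summable_mult) (simp add: summable_real_powr_iff)
    fix k assume "T \<le> k"
    then have "second_moment (Suc k) / real (Suc k) powr (2 * \<eta>)
        \<le> Q * real (Suc k) powr \<delta> / real (Suc k) powr (2 * \<eta>)"
      using T[of "Suc k"] by (intro divide_right_mono) simp_all
    moreover have "expectation (Z k) = second_moment (Suc k) / real (Suc k) powr (2 * \<eta>)"
      unfolding Z_def by (rule integral_divide_zero)
    moreover have "0 \<le> expectation (Z k)"
      using Z_nonneg by simp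
    ultimately show "norm (expectation (Z k)) \<le> Q * real (Suc k) powr (\<delta> - 2 * \<eta>)"
      by (simp add: powr_diff)
  qed
  with Z_int Z_nonneg have "AE \<omega> in M. bdd_above (range (\<lambda>k. Z k \<omega>))"
    by (rule AE_bdd_above_of_summable_integrals)
  then show ?thesis
    unfolding Z_def by eventually_elim (rule bdd_above_norm_div_powr)
qed

end

theorem lemma2:
  fixes U :: "'n::finite \<Rightarrow> real^'d \<Rightarrow> real"
    and g :: "'n \<Rightarrow> real^'d \<Rightarrow> real^'d"
    and H :: "'n \<Rightarrow> real^'d \<Rightarrow> real^'d^'d"
    and K C1 B c\<alpha> c\<beta> c\<gamma> \<tau>\<beta> :: real
    and E :: "'n \<Rightarrow> 'n \<Rightarrow> bool"
    and M :: "'a measure"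
    and x \<xi> w :: "nat \<Rightarrow> 'a \<Rightarrow> real^'d^'n"
    and \<alpha> \<beta> \<gamma> :: "nat \<Rightarrow> real"
  defines "Utot \<equiv> (\<lambda>y. \<Sum>n\<in>UNIV. U n y)"
    and "gradU \<equiv> (\<lambda>y. \<Sum>n\<in>UNIV. g n y)"
    and "lapU \<equiv> (\<lambda>y. \<Sum>n\<in>UNIV. \<Sum>i\<in>UNIV. H n y $ i $ i)"
    and "F \<equiv> nat_filtration M x \<xi> w"
  assumes A1_grad: "\<And>n y. (U n has_derivative (\<lambda>h. g n y \<bullet> h)) (at y)"
    and A1_hess: "\<And>n y. (g n has_derivative (\<lambda>h. H n y *v h)) (at y)"
    and A1_C2: "\<And>n. continuous_on UNIV (H n)"
    and A1_K: "K > 0" and A1_lip: "\<And>n. K-lipschitz_on UNIV (g n)"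
    and A2_coercive: "\<And>n. filterlim (U n) at_top at_infinity"
    and A2_C1: "C1 > 0" and A2: "\<And>n y. norm y \<ge> C1 \<Longrightarrow> y \<bullet> g n y \<ge> 0"
    and A3_min: "(\<exists>y. Utot y = 0) \<and> (\<forall>y. Utot y \<ge> 0)"
    and A3_bdd: "bdd_below (range (\<lambda>y. (norm (gradU y))\<^sup>2 - lapU y))"
    and A4: "gibbs_weak_limit_exists Utot"
    and A5_angle: "Liminf at_infinity
          (\<lambda>y. ereal ((gradU y /\<^sub>R norm (gradU y)) \<bullet> (y /\<^sub>R norm y)))
        \<ge> ereal (sqrt ((4 * real CARD('d) - 4) / (4 * real CARD('d) - 3)))"
    and A5_lower: "Liminf at_infinity (\<lambda>y. ereal (norm (gradU y) / norm y)) > 0"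
    and A5_upper: "Limsup at_infinity (\<lambda>y. ereal (norm (gradU y) / norm y)) < \<infinity>"
    and G_undirected: "undirected_graph E" and G_connected: "connected_graph E"
    and prob: "prob_space M"
    and meas_xi: "\<And>t. \<xi> t \<in> borel_measurable M"
    and meas_w: "\<And>t. w t \<in> borel_measurable M"
    and x1_det: "\<exists>x1. \<forall>\<omega>\<in>space M. x 1 \<omega> = x1"
    and recursion: "\<And>t \<omega>. t \<ge> 1 \<Longrightarrow> \<omega> \<in> space M \<Longrightarrow>
        x (Suc t) \<omega> = x t \<omega> - \<beta> t *\<^sub>R kron_lap (graph_laplacian E) (x t \<omega>)
          - \<alpha> t *\<^sub>R ((\<chi> n. g n (x t \<omega> $ n)) + \<xi> t \<omega>) + \<gamma> t *\<^sub>R w t \<omega>"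
    and A6_adapted: "\<And>t. t \<ge> 1 \<Longrightarrow> \<xi> t \<in> borel_measurable (F (Suc t))"
    and A6_mean: "\<And>t n i. t \<ge> 1 \<Longrightarrow>
        AE \<omega> in M. real_cond_exp M (F t) (\<lambda>\<omega>. \<xi> t \<omega> $ n $ i) \<omega> = 0"
    and A6_B: "B > 0"
    and A6_var: "\<And>t. t \<ge> 1 \<Longrightarrow>
        AE \<omega> in M. nn_cond_exp M (F t) (\<lambda>\<omega>. ennreal ((norm (\<xi> t \<omega>))\<^sup>2)) \<omega> < ennreal B"
    and A7_gauss: "\<And>t n. t \<ge> 1 \<Longrightarrow> distributed M lborel (\<lambda>\<omega>. w t \<omega> $ n)
        (\<lambda>v. ennreal (\<Prod>i\<in>UNIV. std_normal_density (v $ i)))"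
    and A7_indep: "prob_space.indep_vars M (\<lambda>_. borel) (\<lambda>(n, t) \<omega>. w t \<omega> $ n)
        (UNIV \<times> {1..})"
    and A7_indep_past: "\<And>t n. t \<ge> 1 \<Longrightarrow> prob_space.indep_set M (sets (F t))
        {(\<lambda>\<omega>. w t \<omega> $ n) -` A \<inter> space M | A. A \<in> sets (borel :: (real^'d) measure)}"
    and A8_c: "c\<alpha> > 0" "c\<beta> > 0" "c\<gamma> > 0" and A8_tau: "0 < \<tau>\<beta>" "\<tau>\<beta> < 1/2"
    and A8: "\<exists>T. \<forall>t\<ge>T. \<alpha> t = c\<alpha> / real t \<and> \<beta> t = c\<beta> / real t powr \<tau>\<beta> \<and>
        \<gamma> t = c\<gamma> / (sqrt (real t) * sqrt (ln (ln (real t))))"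
  shows "\<forall>\<eta>>1/2. AE \<omega> in M. bdd_above ((\<lambda>t. norm (x t \<omega>) / real t powr \<eta>) ` {1..})"
proof -
  interpret noisy_consensus M g K C1 B E x \<xi> w \<alpha> \<beta> \<gamma>
    using prob A1_lip A2 G_undirected meas_xi meas_w x1_det recursion A6_B A6_var A7_gauss A7_indep_past
    unfolding F_def by (intro noisy_consensus.intro noisy_consensus_axioms.intro) auto
  have rates: "\<forall>\<^sub>F t in sequentially. 0 \<le> \<alpha> t \<and> \<alpha> t \<le> c\<alpha> / real t
      \<and> 0 \<le> \<beta> t \<and> \<beta> t \<le> c\<beta> * real t powr - \<tau>\<beta> \<and> (\<gamma> t)\<^sup>2 \<le> c\<gamma>\<^sup>2 / real t"
    using A8_c A8 by (intro step_size_rates) auto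
  show ?thesis
  proof (intro allI impI)
    fix \<eta> :: real
    assume "1 / 2 < \<eta>"
    define \<delta> where "\<delta> = min \<tau>\<beta> (\<eta> - 1 / 2)"
    have \<delta>: "0 < \<delta>" "\<delta> \<le> \<tau>\<beta>" "\<delta> < 1" "\<delta> < 2 * \<eta> - 1"
      using A8_tau \<open>1 / 2 < \<eta>\<close> by (auto simp: \<delta>_def)
    obtain Q where "\<forall>\<^sub>F t in sequentially. second_moment t \<le> Q * real t powr \<delta>"
      using second_moment_growth[OF \<delta>(1-3) _ _ _ rates] A8_c by auto
    then show "AE \<omega> in M. bdd_above ((\<lambda>t. norm (x t \<omega>) / real t powr \<eta>) ` {1..})"
      by (rule AE_bdd_above_growth[OF \<delta>(4)])
  qed
qed

end
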